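(* In the setting and notation described in the context: (a) for $c\in G_n/\!/K_n$ and $d\in G_k/\!/K_k$ with representatives $g\in G_n$, $h\in G_k$, the product in $\mathrm{gr}\,\mathcal{B}$ of the image of $B[c]$ in $\mathcal{B}_n/\mathcal{B}_{n-1}$ and the image of $B[d]$ in $\mathcal{B}_k/\mathcal{B}_{k-1}$ equals the image in $\mathcal{B}_{n+k}/\mathcal{B}_{n+k-1}$ of $B[e]$, where $e\in G_{n+k}/\!/K_{n+k}$ is the class of $\tilde\nu$ with $((\nu,V_{n+k}))=\theta_{n,k}((g,V_n))\theta_{n,k}^{-1}\circ((h,V_k))$; (b) if $X=\varnothing$, then the algebra $\mathrm{gr}\,\mathcal{B}$ is commutative.
   Context: Let $I$ be a finite set, $X$ a finite or countable set, $V=X\sqcup(I\times\mathbb{N})$, $V_n=X\sqcup(I\times J_n)$ with $J_n=\{1,\dots,n\}$. $S_\infty$ (finitely supported permutations of $\mathbb{N}$) acts on $V$ by $\sigma(i,m)=(i,\sigma(m))$ on $I\times\mathbb{N}$ and trivially on $X$; $S_n\subset S_\infty$ permutes $J_n$. $G_\infty$ is a subgroup of the group of finitely supported permutations of $V$ containing $S_\infty$; $G_n$ is the set of elements of $G_\infty$ fixing every point outside $V_n$; $K_n=S_n$; $G_n/\!/K_n$ is the set of orbits of $K_n$ on $G_n$ under conjugation. Local bijections: a local bijection is a pair $((\omega,\Omega))$ with $\Omega=X\cup(I\times F)$, $F\subset\mathbb{N}$ finite, $\omega:\Omega\to\Omega$ a bijection; $\tilde\omega$ is its extension to $V$ fixing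 all points outside $\Omega$. Product: $((\omega,\Omega))\circ((\mu,M))=((\tilde\omega\tilde\mu|_{\Omega\cup M},\Omega\cup M))$. Formal series of local bijections are multiplied by the convolution $c_{((\nu,N))}=\sum a_{((\omega,\Omega))}b_{((\mu,M))}$ over pairs with $\Omega\cup M=N$, $\tilde\omega\tilde\mu=\tilde\nu$. An injective map $\sigma:J_n\to\mathbb{N}$ is extended to $V_n\to X\cup(I\times\sigma(J_n))$ by $(i,m)\mapsto(i,\sigma(m))$ and identity on $X$; for $g\in G_n$, $\sigma((g,V_n))\sigma^{-1}:=((\sigma g\sigma^{-1},X\cup(I\times\sigma(J_n))))$. For $c\in G_n/\!/K_n$ with representative $g$, $B[c]=\sum_{\Omega\subset\mathbb{N},\#\Omega=n}\sum_{\sigma:J_n\to\Omega\text{ bijective}}\sigma((g,V_n))\sigma^{-1}$. The linear span $\mathcal{B}$ of all $B[c]$, $c\in\coprod_{j\ge0}G_j/\!/K_j$, is closed under convolution and the $B[c]$ form a basis of it. $\mathcal{B}_n$ is the span of the $B[c]$ with $c\in\coprod_{j=0}^{n}G_j/\!/K_j$ ($\mathcal{B}_{-1}=0$); one has $\mathcal{B}_k*\mathcal{B}_l\subseteq\mathcal{B}_{k+l}$, and $\mathrm{gr}\,\mathcal{B}=\bigoplus_{k\ge0}\mathcal{B}_k/\mathcal{B}_{k-1}$ is the associated graded algebra with product induced by $\mathcal{B}_k\times\mathcal{B}_l\to\mathcal{B}_{k+l}$. $\theta_{n,k}:J_n\to J_{n+k}$ is the injective map $j\mapsto j+k$. *)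

theory Defs
  imports Complex_Main "HOL-Combinatorics.Permutations" "HOL-Library.FuncSet"
    "HOL-Library.Countable_Set"
begin

text \<open>Points of V: Inl x for x in X, Inr (i,m) for (i,m) in I x N, where N = {1,2,...}.\<close>

type_synonym ('x,'i) pt = "'x + 'i \<times> nat"

definition OmegaF :: "'x set \<Rightarrow> 'i set \<Rightarrow> nat set \<Rightarrow> ('x,'i) pt set" where
  "OmegaF X I F = Inl ` X \<union> Inr ` (I \<times> F)"

definition Vall :: "'x set \<Rightarrow> 'i set \<Rightarrow> ('x,'i) pt set" where
  "Vall X I = OmegaF X I {1..}"

definition Vn :: "'x set \<Rightarrow> 'i set \<Rightarrow> nat \<Rightarrow> ('x,'i) pt set" where
  "Vn X I n = OmegaF X I {1..n}"

definition liftN :: "(nat \<Rightarrow> nat) \<Rightarrow> ('x,'i) pt \<Rightarrow> ('x,'i) pt" where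
  "liftN s v = (case v of Inl x \<Rightarrow> Inl x | Inr (i,m) \<Rightarrow> Inr (i, s m))"

definition fin_supp :: "('a \<Rightarrow> 'a) \<Rightarrow> bool" where
  "fin_supp f \<longleftrightarrow> finite {v. f v \<noteq> v}"

definition S_inf :: "(nat \<Rightarrow> nat) set" where
  "S_inf = {s. s permutes {1..} \<and> fin_supp s}"

definition admissible_group :: "'x set \<Rightarrow> 'i set \<Rightarrow> (('x,'i) pt \<Rightarrow> ('x,'i) pt) set \<Rightarrow> bool" where
  "admissible_group X I G \<longleftrightarrow>
     (\<forall>g\<in>G. g permutes Vall X I \<and> fin_supp g) \<and>
     id \<in> G \<and> (\<forall>g\<in>G. \<forall>h\<in>G. g \<circ> h \<in> G) \<and> (\<forall>g\<in>G. inv g \<in> G) \<and>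
     (\<forall>s\<in>S_inf. liftN s \<in> G)"

definition Gn :: "'x set \<Rightarrow> 'i set \<Rightarrow> (('x,'i) pt \<Rightarrow> ('x,'i) pt) set \<Rightarrow> nat
                   \<Rightarrow> (('x,'i) pt \<Rightarrow> ('x,'i) pt) set" where
  "Gn X I G n = {g\<in>G. \<forall>v. v \<notin> Vn X I n \<longrightarrow> g v = v}"

text \<open>A local bijection ((omega, X \<union> I \<times> F)) is represented by the pair (F, omega~),
  where omega~ is the extension of omega fixing every point outside Omega.\<close>
type_synonym ('x,'i) lbij = "nat set \<times> (('x,'i) pt \<Rightarrow> ('x,'i) pt)"

definition lb_comp :: "('x,'i) lbij \<Rightarrow> ('x,'i) lbij \<Rightarrow> ('x,'i) lbij" where
  "lb_comp p q = (fst p \<union> fst q, snd p \<circ> snd q)"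

type_synonym ('x,'i) series = "('x,'i) lbij \<Rightarrow> complex"

definition conv :: "('x,'i) series \<Rightarrow> ('x,'i) series \<Rightarrow> ('x,'i) series" where
  "conv a b = (\<lambda>r. \<Sum>(p,q)\<in>{(p,q). a p \<noteq> 0 \<and> b q \<noteq> 0 \<and> lb_comp p q = r}. a p * b q)"

definition conj_loc :: "'x set \<Rightarrow> 'i set \<Rightarrow> nat \<Rightarrow> (('x,'i) pt \<Rightarrow> ('x,'i) pt)
                        \<Rightarrow> (nat \<Rightarrow> nat) \<Rightarrow> ('x,'i) lbij" where
  "conj_loc X I n g \<sigma> =
     (\<sigma> ` {1..n},
      \<lambda>v. if v \<in> OmegaF X I (\<sigma> ` {1..n})
           then liftN \<sigma> (g (liftN (inv_into {1..n} \<sigma>) v)) else v)"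

text \<open>B[c] for the class c of g in G_n: the coefficient of a local bijection r is the number of
  pairs (Omega, sigma) (Omega \<subseteq> N, #Omega = n, sigma : J_n \<rightarrow> Omega bijective) with
  sigma((g,V_n))sigma^{-1} = r; such pairs are exactly the injections J_n \<rightarrow> N.\<close>
definition Bser :: "'x set \<Rightarrow> 'i set \<Rightarrow> nat \<Rightarrow> (('x,'i) pt \<Rightarrow> ('x,'i) pt) \<Rightarrow> ('x,'i) series" where
  "Bser X I n g = (\<lambda>r. of_nat (card {\<sigma> \<in> {1..n} \<rightarrow>\<^sub>E {1..}. inj_on \<sigma> {1..n} \<and> conj_loc X I n g \<sigma> = r}))"

definition lin_span :: "('x,'i) series set \<Rightarrow> ('x,'i) series set" where
  "lin_span A = {\<lambda>r. \<Sum>s\<in>S. c s * s r | S c. finite S \<and> S \<subseteq> A}"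

definition Bfilt :: "'x set \<Rightarrow> 'i set \<Rightarrow> (('x,'i) pt \<Rightarrow> ('x,'i) pt) set \<Rightarrow> int \<Rightarrow> ('x,'i) series set" where
  "Bfilt X I G m = lin_span {Bser X I j g | j g. int j \<le> m \<and> g \<in> Gn X I G j}"

end

theory Submission
  imports Defs "HOL-Library.Function_Algebras"
begin

text \<open>By counting, the coefficient of \<open>r\<close> in \<open>B[g] * B[h]\<close> is the number of pairs of injections
  \<open>(\<sigma>, \<tau>)\<close> with \<open>\<sigma>((g,V\<^sub>n))\<sigma>\<^sup>-\<^sup>1 \<circ> \<tau>((h,V\<^sub>k))\<tau>\<^sup>-\<^sup>1 = r\<close>. Normalising the union of the images
  of such a pair to \<open>J\<^sub>m\<close> writes it as \<open>(\<rho> \<circ> \<beta>, \<rho> \<circ> \<alpha>)\<close>, where \<open>(\<beta>, \<alpha>)\<close> describes how the two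
  images overlap, and each pair arises exactly \<open>m!\<close> times; hence
  \<open>B[g] * B[h] = \<Sum>\<^sub>m 1/m! \<Sum>\<^sub>(\<^sub>\<beta>\<^sub>,\<^sub>\<alpha>\<^sub>) B[g\<^sub>\<beta>\<^sub>\<alpha>]\<close> with \<open>g\<^sub>\<beta>\<^sub>\<alpha> \<in> G\<^sub>m\<close>. Only pairs with
  disjoint images reach \<open>m = n + k\<close>, and their contribution is exactly \<open>B[e]\<close>; everything else
  lies in \<open>\<B>\<^sub>n\<^sub>+\<^sub>k\<^sub>-\<^sub>1\<close>. If \<open>X = \<emptyset>\<close>, local bijections with disjoint supports commute, so swapping
  the pair identifies the leading terms of \<open>B[c] * B[d]\<close> and \<open>B[d] * B[c]\<close>, and bilinearity of
  the convolution extends this to all of \<open>gr \<B>\<close>.\<close>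

text \<open>Keep intervals \<open>{1..n}\<close> in simp normal form (instead of \<open>{Suc 0..n}\<close>), so that facts
  about \<open>J\<^sub>n\<close> apply literally.\<close>
declare One_nat_def [simp del]

section \<open>Lifts and supports\<close>

lemma liftN_Inl [simp]: "liftN s (Inl x) = Inl x"
  by (simp add: liftN_def)

lemma liftN_Inr [simp]: "liftN s (Inr (i, m)) = Inr (i, s m)"
  by (simp add: liftN_def)

lemma Inl_in_OmegaF [simp]: "Inl x \<in> OmegaF X I F \<longleftrightarrow> x \<in> X"
  by (auto simp: OmegaF_def)

lemma Inr_in_OmegaF [simp]: "Inr (i, m) \<in> OmegaF X I F \<longleftrightarrow> i \<in> I \<and> m \<in> F"
  by (auto simp: OmegaF_def)

lemma OmegaF_mono: "F \<subseteq> F' \<Longrightarrow> OmegaF X I F \<subseteq> OmegaF X I F'"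
  by (auto simp: OmegaF_def)

lemma pt_cases: obtains x where "v = Inl x" | i m where "v = Inr (i, m)"
  by (cases v) auto

lemma liftN_comp: "liftN s (liftN t v) = liftN (s \<circ> t) v"
  by (cases v rule: pt_cases) auto

lemma liftN_ident: "liftN (\<lambda>j. j) v = v"
  by (cases v rule: pt_cases) auto

lemma liftN_cong: "v \<in> OmegaF X I F \<Longrightarrow> (\<And>m. m \<in> F \<Longrightarrow> s m = t m) \<Longrightarrow> liftN s v = liftN t v"
  by (cases v rule: pt_cases) auto

lemma liftN_in_OmegaF: "s ` F \<subseteq> F' \<Longrightarrow> v \<in> OmegaF X I F \<Longrightarrow> liftN s v \<in> OmegaF X I F'"
  by (cases v rule: pt_cases) auto

lemma liftN_in_OmegaF_image: "v \<in> OmegaF X I A \<Longrightarrow> liftN f v \<in> OmegaF X I (f ` A)"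
  by (rule liftN_in_OmegaF) auto

lemma OmegaF_imageE:
  assumes "v \<in> OmegaF X I (f ` A)"
  obtains u where "u \<in> OmegaF X I A" "v = liftN f u"
  using assms by (cases v rule: pt_cases) (auto, metis Inl_in_OmegaF liftN_Inl, metis Inr_in_OmegaF liftN_Inr)

lemma liftN_inv_into_in_OmegaF: "v \<in> OmegaF X I (f ` A) \<Longrightarrow> liftN (inv_into A f) v \<in> OmegaF X I A"
  by (rule liftN_in_OmegaF) (auto intro: inv_into_into)

lemma liftN_inv_into_liftN: "inj_on f A \<Longrightarrow> u \<in> OmegaF X I A \<Longrightarrow> liftN (inv_into A f) (liftN f u) = u"
  by (cases u rule: pt_cases) auto

lemma liftN_liftN_inv_into: "v \<in> OmegaF X I (f ` A) \<Longrightarrow> liftN f (liftN (inv_into A f) v) = v"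
  by (cases v rule: pt_cases) (auto simp: f_inv_into_f)

definition supported_on :: "'x set \<Rightarrow> 'i set \<Rightarrow> nat set \<Rightarrow> (('x,'i) pt \<Rightarrow> ('x,'i) pt) \<Rightarrow> bool" where
  "supported_on X I F g \<longleftrightarrow>
     (\<forall>v. v \<notin> OmegaF X I F \<longrightarrow> g v = v) \<and> (\<forall>v \<in> OmegaF X I F. g v \<in> OmegaF X I F)"

lemma supported_on_fixes: "supported_on X I F g \<Longrightarrow> v \<notin> OmegaF X I F \<Longrightarrow> g v = v"
  by (simp add: supported_on_def)

lemma supported_on_maps: "supported_on X I F g \<Longrightarrow> v \<in> OmegaF X I F \<Longrightarrow> g v \<in> OmegaF X I F"
  by (simp add: supported_on_def)

lemma supported_on_mono:
  assumes "supported_on X I F g" "F \<subseteq> F'"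
  shows "supported_on X I F' g"
  using assms OmegaF_mono[OF assms(2)] unfolding supported_on_def by (metis subsetD)

lemma supported_on_comp:
  "supported_on X I F g \<Longrightarrow> supported_on X I F h \<Longrightarrow> supported_on X I F (g \<circ> h)"
  by (simp add: supported_on_def)

lemma Gn_supported_on:
  assumes "admissible_group X I G" "g \<in> Gn X I G n"
  shows "supported_on X I {1..n} g"
proof -
  have fix_out: "\<And>v. v \<notin> Vn X I n \<Longrightarrow> g v = v" and "g \<in> G"
    using assms(2) by (auto simp: Gn_def)
  then have "inj g"
    using assms(1) by (auto simp: admissible_group_def intro: permutes_inj)
  have "g v \<in> Vn X I n" if "v \<in> Vn X I n" for v
  proof (rule ccontr)
    assume "g v \<notin> Vn X I n"
    then have "g (g v) = g v" by (rule fix_out)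
    with \<open>inj g\<close> have "g v = v" by (auto dest: injD)
    with that \<open>g v \<notin> Vn X I n\<close> show False by simp
  qed
  with fix_out show ?thesis by (auto simp: supported_on_def Vn_def)
qed

section \<open>Conjugation and transport of local bijections\<close>

lemma fst_conj_loc [simp]: "fst (conj_loc X I n g \<sigma>) = \<sigma> ` {1..n}"
  by (simp add: conj_loc_def)

lemma conj_loc_outside: "v \<notin> OmegaF X I (\<sigma> ` {1..n}) \<Longrightarrow> snd (conj_loc X I n g \<sigma>) v = v"
  by (simp add: conj_loc_def)

lemma conj_loc_inside: "v \<in> OmegaF X I (\<sigma> ` {1..n}) \<Longrightarrow>
   snd (conj_loc X I n g \<sigma>) v = liftN \<sigma> (g (liftN (inv_into {1..n} \<sigma>) v))"
  by (simp add: conj_loc_def)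

lemma supported_on_conj_loc:
  assumes "supported_on X I {1..n} g"
  shows "supported_on X I (\<sigma> ` {1..n}) (snd (conj_loc X I n g \<sigma>))"
  unfolding supported_on_def
proof (intro conjI allI impI ballI)
  fix v assume v: "v \<in> OmegaF X I (\<sigma> ` {1..n})"
  then have "g (liftN (inv_into {1..n} \<sigma>) v) \<in> OmegaF X I {1..n}"
    by (intro supported_on_maps[OF assms] liftN_inv_into_in_OmegaF)
  then show "snd (conj_loc X I n g \<sigma>) v \<in> OmegaF X I (\<sigma> ` {1..n})"
    using v by (simp add: conj_loc_inside liftN_in_OmegaF_image)
qed (rule conj_loc_outside)

lemma conj_loc_cong:
  assumes "\<And>j. j \<in> {1..n} \<Longrightarrow> \<sigma> j = \<sigma>' j" "supported_on X I {1..n} g"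
  shows "conj_loc X I n g \<sigma> = conj_loc X I n g \<sigma>'"
proof -
  have im: "\<sigma> ` {1..n} = \<sigma>' ` {1..n}"
    using assms(1) by (rule image_cong[OF refl])
  have inv: "inv_into {1..n} \<sigma> = inv_into {1..n} \<sigma>'"
    using assms(1) unfolding inv_into_def by (intro ext arg_cong[where f = Eps]) auto
  have "liftN \<sigma> (g (liftN (inv_into {1..n} \<sigma>) v)) = liftN \<sigma>' (g (liftN (inv_into {1..n} \<sigma>) v))"
    if "v \<in> OmegaF X I (\<sigma> ` {1..n})" for v
  proof (rule liftN_cong[OF supported_on_maps[OF assms(2)] assms(1)])
    show "liftN (inv_into {1..n} \<sigma>) v \<in> OmegaF X I {1..n}"
      using that by (rule liftN_inv_into_in_OmegaF)
  qed
  then show ?thesis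
    unfolding conj_loc_def im inv by (simp add: im fun_eq_iff)
qed

lemma conj_loc_ident:
  assumes "supported_on X I {1..k} h"
  shows "conj_loc X I k h (\<lambda>j. j) = ({1..k}, h)"
proof -
  have "liftN (inv_into {1..k} (\<lambda>j. j)) v = v" if "v \<in> OmegaF X I {1..k}" for v
    using liftN_liftN_inv_into[of v X I "\<lambda>j. j" "{1..k}"] that by (simp add: liftN_ident)
  then show ?thesis
    using supported_on_fixes[OF assms]
    by (auto simp: conj_loc_def liftN_ident fun_eq_iff)
qed

definition transport :: "'x set \<Rightarrow> 'i set \<Rightarrow> nat \<Rightarrow> (nat \<Rightarrow> nat) \<Rightarrow> ('x,'i) lbij \<Rightarrow> ('x,'i) lbij" where
  "transport X I m \<rho> p = (\<rho> ` fst p, \<lambda>v. if v \<in> OmegaF X I (\<rho> ` {1..m})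
      then liftN \<rho> (snd p (liftN (inv_into {1..m} \<rho>) v)) else v)"

lemma transport_inside: "v \<in> OmegaF X I (\<rho> ` {1..m}) \<Longrightarrow>
    snd (transport X I m \<rho> p) v = liftN \<rho> (snd p (liftN (inv_into {1..m} \<rho>) v))"
  by (simp add: transport_def)

lemma transport_outside: "v \<notin> OmegaF X I (\<rho> ` {1..m}) \<Longrightarrow> snd (transport X I m \<rho> p) v = v"
  by (simp add: transport_def)

lemma conj_loc_eq_transport: "conj_loc X I m g \<rho> = transport X I m \<rho> ({1..m}, g)"
  by (simp only: conj_loc_def transport_def fst_conv snd_conv)

lemma transport_conj_loc:
  assumes \<rho>: "inj_on \<rho> {1..m}" and \<beta>: "\<beta> ` {1..n} \<subseteq> {1..m}" "inj_on \<beta> {1..n}"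
  shows "transport X I m \<rho> (conj_loc X I n g \<beta>) = conj_loc X I n g (\<rho> \<circ> \<beta>)"
proof (rule prod_eqI)
  have \<rho>\<beta>: "inj_on (\<rho> \<circ> \<beta>) {1..n}"
    using \<rho> \<beta> by (meson comp_inj_on inj_on_subset)
  have "snd (transport X I m \<rho> (conj_loc X I n g \<beta>)) v = snd (conj_loc X I n g (\<rho> \<circ> \<beta>)) v" for v
  proof (cases "v \<in> OmegaF X I ((\<rho> \<circ> \<beta>) ` {1..n})")
    case True
    then obtain u where u: "u \<in> OmegaF X I {1..n}" and v: "v = liftN (\<rho> \<circ> \<beta>) u"
      by (rule OmegaF_imageE)
    have \<beta>u: "liftN \<beta> u \<in> OmegaF X I {1..m}" "liftN \<beta> u \<in> OmegaF X I (\<beta> ` {1..n})"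
      using u \<beta>(1) by (auto intro: liftN_in_OmegaF liftN_in_OmegaF_image)
    have "v = liftN \<rho> (liftN \<beta> u)"
      by (simp add: v liftN_comp)
    then have "snd (transport X I m \<rho> (conj_loc X I n g \<beta>)) v
        = liftN \<rho> (snd (conj_loc X I n g \<beta>) (liftN \<beta> u))"
      using \<beta>u(1) \<rho> by (simp add: transport_inside liftN_in_OmegaF_image liftN_inv_into_liftN)
    also have "\<dots> = liftN \<rho> (liftN \<beta> (g u))"
      using \<beta>u(2) \<beta>(2) u by (simp add: conj_loc_inside liftN_inv_into_liftN)
    also have "\<dots> = liftN (\<rho> \<circ> \<beta>) (g u)"
      by (simp add: liftN_comp)
    also have "\<dots> = snd (conj_loc X I n g (\<rho> \<circ> \<beta>)) v"
      using True \<rho>\<beta> u by (simp add: conj_loc_inside v liftN_inv_into_liftN del: comp_apply)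
    finally show ?thesis .
  next
    case False
    have "liftN (inv_into {1..m} \<rho>) v \<notin> OmegaF X I (\<beta> ` {1..n})"
      if "v \<in> OmegaF X I (\<rho> ` {1..m})"
    proof
      assume "liftN (inv_into {1..m} \<rho>) v \<in> OmegaF X I (\<beta> ` {1..n})"
      then have "liftN \<rho> (liftN (inv_into {1..m} \<rho>) v) \<in> OmegaF X I (\<rho> ` \<beta> ` {1..n})"
        by (rule liftN_in_OmegaF_image)
      with that False show False
        by (simp add: liftN_liftN_inv_into image_comp)
    qed
    then show ?thesis
      using False by (cases "v \<in> OmegaF X I (\<rho> ` {1..m})")
        (simp_all add: transport_inside transport_outside conj_loc_outside liftN_liftN_inv_into)
  qed
  then show "snd (transport X I m \<rho> (conj_loc X I n g \<beta>)) = snd (conj_loc X I n g (\<rho> \<circ> \<beta>))" ..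
qed (simp add: transport_def image_comp)

lemma transport_lb_comp:
  assumes \<rho>: "inj_on \<rho> {1..m}" and q: "\<And>v. v \<in> OmegaF X I {1..m} \<Longrightarrow> snd q v \<in> OmegaF X I {1..m}"
  shows "transport X I m \<rho> (lb_comp p q) = lb_comp (transport X I m \<rho> p) (transport X I m \<rho> q)"
proof (rule prod_eqI)
  have "snd (transport X I m \<rho> (lb_comp p q)) v = snd (transport X I m \<rho> p) (snd (transport X I m \<rho> q) v)"
    for v
  proof (cases "v \<in> OmegaF X I (\<rho> ` {1..m})")
    case True
    define w where "w = snd q (liftN (inv_into {1..m} \<rho>) v)"
    have "w \<in> OmegaF X I {1..m}"
      using True unfolding w_def by (intro q liftN_inv_into_in_OmegaF)
    then have "liftN \<rho> w \<in> OmegaF X I (\<rho> ` {1..m})" "liftN (inv_into {1..m} \<rho>) (liftN \<rho> w) = w"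
      using \<rho> by (auto intro: liftN_in_OmegaF_image liftN_inv_into_liftN)
    then have "snd (transport X I m \<rho> p) (liftN \<rho> w) = liftN \<rho> (snd p w)"
      by (simp only: transport_inside)
    then show ?thesis
      using True by (simp only: transport_inside lb_comp_def snd_conv comp_apply w_def)
  qed (simp add: transport_outside)
  then show "snd (transport X I m \<rho> (lb_comp p q)) = snd (lb_comp (transport X I m \<rho> p) (transport X I m \<rho> q))"
    by (simp add: lb_comp_def fun_eq_iff)
qed (simp add: transport_def lb_comp_def image_Un)

lemma inj_on_extends_to_S_inf:
  assumes inj: "inj_on \<sigma> {1..n}" and sub: "\<sigma> ` {1..n} \<subseteq> {1..}"
  obtains s where "s \<in> S_inf" "\<And>j. j \<in> {1..n} \<Longrightarrow> s j = \<sigma> j"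
proof -
  define J where "J = {1..n::nat}"
  define A where "A = J \<union> \<sigma> ` J"
  have fin: "finite A" "finite (A - J)" "finite (A - \<sigma> ` J)"
    by (simp_all add: A_def J_def)
  have "card (A - J) = card (A - \<sigma> ` J)"
    using fin inj by (simp add: A_def J_def card_Diff_subset card_image)
  then obtain \<gamma> where \<gamma>: "bij_betw \<gamma> (A - J) (A - \<sigma> ` J)"
    using finite_same_card_bij[OF fin(2,3)] by metis
  define s where "s x = (if x \<in> J then \<sigma> x else if x \<in> A then \<gamma> x else x)" for x
  have "bij_betw \<sigma> J (\<sigma> ` J)"
    using inj by (simp add: J_def inj_on_imp_bij_betw)
  then have "bij_betw s J (\<sigma> ` J)"
    by (rule bij_betw_cong[THEN iffD1, rotated]) (simp add: s_def)
  moreover have "bij_betw s (A - J) (A - \<sigma> ` J)"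
    using \<gamma> by (rule bij_betw_cong[THEN iffD1, rotated]) (simp add: s_def)
  ultimately have "bij_betw s (J \<union> (A - J)) (\<sigma> ` J \<union> (A - \<sigma> ` J))"
    by (rule bij_betw_combine) blast
  then have "bij_betw s A A"
    by (simp add: A_def Un_absorb1)
  then have "s permutes A"
    by (rule bij_imp_permutes) (simp add: s_def A_def)
  moreover have "A \<subseteq> {1..}"
    using sub by (auto simp: A_def J_def)
  ultimately have "s permutes {1..}"
    by (rule permutes_subset)
  moreover have "fin_supp s"
    using fin(1) unfolding fin_supp_def by (rule finite_subset[rotated]) (auto simp: s_def A_def)
  ultimately have "s \<in> S_inf"
    by (simp add: S_inf_def)
  then show ?thesis
    by (rule that) (simp add: s_def J_def)
qed

lemma inv_in_S_inf:
  assumes "s \<in> S_inf"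
  shows "inv s \<in> S_inf"
proof -
  have p: "s permutes {1..}" and "fin_supp s"
    using assms by (auto simp: S_inf_def)
  moreover have "{v. inv s v \<noteq> v} = {v. s v \<noteq> v}"
    using permutes_inverses[OF p] by metis
  ultimately show ?thesis
    by (simp add: S_inf_def fin_supp_def permutes_inv)
qed

lemma snd_conj_loc_bij:
  fixes X :: "'x set" and I :: "'i set"
  assumes s: "bij s" and g: "supported_on X I {1..n} g"
  shows "snd (conj_loc X I n g s) = liftN s \<circ> g \<circ> liftN (inv s)"
proof
  fix v :: "('x,'i) pt"
  have "s \<circ> inv s = id" "inv s \<circ> s = id"
    using bij_is_surj[OF s] surj_iff inv_o_cancel[OF bij_is_inj[OF s]] by blast+
  then have ss: "liftN s (liftN (inv s) v) = v" "\<And>u. liftN (inv s) (liftN s u) = u"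
    by (simp_all add: liftN_comp liftN_ident id_def)
  show "snd (conj_loc X I n g s) v = (liftN s \<circ> g \<circ> liftN (inv s)) v"
  proof (cases "v \<in> OmegaF X I (s ` {1..n})")
    case True
    then obtain u where u: "u \<in> OmegaF X I {1..n}" and v: "v = liftN s u"
      by (rule OmegaF_imageE)
    have "inj_on s {1..n}"
      using bij_is_inj[OF s] by (rule inj_on_subset) simp
    then have "liftN (inv_into {1..n} s) v = u"
      unfolding v using u by (rule liftN_inv_into_liftN)
    then show ?thesis
      using True by (simp add: conj_loc_inside v ss(2))
  next
    case False
    then have "liftN (inv s) v \<notin> OmegaF X I {1..n}"
      using liftN_in_OmegaF_image[of "liftN (inv s) v" X I "{1..n}" s] ss(1) by auto
    then show ?thesis
      using False by (simp add: conj_loc_outside supported_on_fixes[OF g] ss(1))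
  qed
qed

lemma snd_conj_loc_in_G:
  assumes adm: "admissible_group X I G" and g: "g \<in> Gn X I G n"
    and inj: "inj_on \<sigma> {1..n}" and sub: "\<sigma> ` {1..n} \<subseteq> {1..}"
  shows "snd (conj_loc X I n g \<sigma>) \<in> G"
proof -
  obtain s where s: "s \<in> S_inf" and s\<sigma>: "\<And>j. j \<in> {1..n} \<Longrightarrow> s j = \<sigma> j"
    using inj_on_extends_to_S_inf[OF inj sub] by metis
  have sup: "supported_on X I {1..n} g"
    using adm g by (rule Gn_supported_on)
  have "bij s"
    using s by (auto simp: S_inf_def permutes_bij)
  then have "snd (conj_loc X I n g \<sigma>) = liftN s \<circ> g \<circ> liftN (inv s)"
    using conj_loc_cong[of n s \<sigma>, OF s\<sigma> sup] snd_conj_loc_bij[OF _ sup] by metis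
  moreover have "liftN s \<in> G" "liftN (inv s) \<in> G" "g \<in> G"
    using adm s inv_in_S_inf[OF s] g by (auto simp: admissible_group_def Gn_def)
  ultimately show ?thesis
    using adm by (simp add: admissible_group_def)
qed

section \<open>Covering pairs\<close>

text \<open>A pair of injections \<open>\<sigma> : J\<^sub>n \<rightarrow> \<nat>\<close>, \<open>\<tau> : J\<^sub>k \<rightarrow> \<nat>\<close> whose images have a union of
  size \<open>m\<close> factors as \<open>(\<rho> \<circ> \<beta>, \<rho> \<circ> \<alpha>)\<close> with \<open>(\<beta>, \<alpha>)\<close> a covering pair and \<open>\<rho>\<close> injective on \<open>J\<^sub>m\<close>;
  the covering pair records how the two images overlap.\<close>
definition covering_pairs :: "nat \<Rightarrow> nat \<Rightarrow> nat \<Rightarrow> ((nat \<Rightarrow> nat) \<times> (nat \<Rightarrow> nat)) set" where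
  "covering_pairs n k m = {(\<beta>, \<alpha>). \<beta> \<in> {1..n} \<rightarrow>\<^sub>E {1..m} \<and> \<alpha> \<in> {1..k} \<rightarrow>\<^sub>E {1..m} \<and>
     inj_on \<beta> {1..n} \<and> inj_on \<alpha> {1..k} \<and> \<beta> ` {1..n} \<union> \<alpha> ` {1..k} = {1..m}}"

definition glue :: "'x set \<Rightarrow> 'i set \<Rightarrow> nat \<Rightarrow> nat \<Rightarrow> (('x,'i) pt \<Rightarrow> ('x,'i) pt) \<Rightarrow> (('x,'i) pt \<Rightarrow> ('x,'i) pt)
    \<Rightarrow> (nat \<Rightarrow> nat) \<times> (nat \<Rightarrow> nat) \<Rightarrow> ('x,'i) pt \<Rightarrow> ('x,'i) pt" where
  "glue X I n k g h p = snd (conj_loc X I n g (fst p)) \<circ> snd (conj_loc X I k h (snd p))"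

lemma covering_pairsD:
  assumes "(\<beta>, \<alpha>) \<in> covering_pairs n k m"
  shows "\<beta> \<in> {1..n} \<rightarrow>\<^sub>E {1..m}" "\<alpha> \<in> {1..k} \<rightarrow>\<^sub>E {1..m}"
    "\<beta> ` {1..n} \<subseteq> {1..m}" "\<alpha> ` {1..k} \<subseteq> {1..m}" "inj_on \<beta> {1..n}" "inj_on \<alpha> {1..k}"
    "\<beta> ` {1..n} \<union> \<alpha> ` {1..k} = {1..m}"
  using assms by (auto simp: covering_pairs_def)

lemma finite_covering_pairs: "finite (covering_pairs n k m)"
proof (rule finite_subset)
  show "covering_pairs n k m \<subseteq> ({1..n} \<rightarrow>\<^sub>E {1..m}) \<times> ({1..k} \<rightarrow>\<^sub>E {1..m})"
    by (auto simp: covering_pairs_def)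
qed (simp add: finite_PiE)

lemma supported_on_glue:
  assumes p: "(\<beta>, \<alpha>) \<in> covering_pairs n k m"
    and g: "supported_on X I {1..n} g" and h: "supported_on X I {1..k} h"
  shows "supported_on X I {1..m} (glue X I n k g h (\<beta>, \<alpha>))"
  unfolding glue_def fst_conv snd_conv using covering_pairsD(3,4)[OF p]
  by (intro supported_on_comp supported_on_mono[OF supported_on_conj_loc] g h)

lemma glue_in_Gn:
  assumes adm: "admissible_group X I G" and p: "(\<beta>, \<alpha>) \<in> covering_pairs n k m"
    and g: "g \<in> Gn X I G n" and h: "h \<in> Gn X I G k"
  shows "glue X I n k g h (\<beta>, \<alpha>) \<in> Gn X I G m"
proof -
  note P = covering_pairsD[OF p]
  have "\<beta> ` {1..n} \<subseteq> {1..}" "\<alpha> ` {1..k} \<subseteq> {1..}"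
    using P(3,4) by auto
  then have "snd (conj_loc X I n g \<beta>) \<in> G" "snd (conj_loc X I k h \<alpha>) \<in> G"
    using P(5,6) by (simp_all add: snd_conj_loc_in_G[OF adm g] snd_conj_loc_in_G[OF adm h])
  then have "glue X I n k g h (\<beta>, \<alpha>) \<in> G"
    using adm by (simp add: glue_def admissible_group_def)
  moreover have "supported_on X I {1..m} (glue X I n k g h (\<beta>, \<alpha>))"
    using p Gn_supported_on[OF adm g] Gn_supported_on[OF adm h] by (rule supported_on_glue)
  ultimately show ?thesis
    by (simp add: Gn_def supported_on_def Vn_def)
qed

lemma conj_loc_glue:
  assumes p: "(\<beta>, \<alpha>) \<in> covering_pairs n k m" and \<rho>: "inj_on \<rho> {1..m}"
    and g: "supported_on X I {1..n} g" and h: "supported_on X I {1..k} h"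
  shows "conj_loc X I m (glue X I n k g h (\<beta>, \<alpha>)) \<rho> =
         lb_comp (conj_loc X I n g (\<rho> \<circ> \<beta>)) (conj_loc X I k h (\<rho> \<circ> \<alpha>))"
proof -
  note P = covering_pairsD[OF p]
  have "conj_loc X I m (glue X I n k g h (\<beta>, \<alpha>)) \<rho>
      = transport X I m \<rho> (lb_comp (conj_loc X I n g \<beta>) (conj_loc X I k h \<alpha>))"
    unfolding conj_loc_eq_transport[of X I m] using P(7) by (simp add: lb_comp_def glue_def)
  also have "\<dots> = lb_comp (transport X I m \<rho> (conj_loc X I n g \<beta>)) (transport X I m \<rho> (conj_loc X I k h \<alpha>))"
    using \<rho> supported_on_maps[OF supported_on_mono[OF supported_on_conj_loc[OF h] P(4)]]
    by (rule transport_lb_comp)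
  also have "\<dots> = lb_comp (conj_loc X I n g (\<rho> \<circ> \<beta>)) (conj_loc X I k h (\<rho> \<circ> \<alpha>))"
    using \<rho> P(3-6) by (simp add: transport_conj_loc)
  finally show ?thesis .
qed

section \<open>Counting injections\<close>

definition inj_maps :: "nat \<Rightarrow> (nat \<Rightarrow> nat) set" where
  "inj_maps n = {\<sigma> \<in> {1..n} \<rightarrow>\<^sub>E {1..}. inj_on \<sigma> {1..n}}"

lemma Bser_eq_card: "Bser X I n g r = of_nat (card {\<sigma> \<in> inj_maps n. conj_loc X I n g \<sigma> = r})"
  unfolding Bser_def inj_maps_def by (simp add: conj_assoc)

lemma finite_conj_loc_fiber: "finite {\<sigma> \<in> inj_maps n. conj_loc X I n g \<sigma> = r}"
proof (cases "finite (fst r)")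
  case True
  have "{\<sigma> \<in> inj_maps n. conj_loc X I n g \<sigma> = r} \<subseteq> {1..n} \<rightarrow>\<^sub>E fst r"
    by (auto simp: inj_maps_def PiE_def)
  moreover have "finite ({1..n} \<rightarrow>\<^sub>E fst r)"
    using True by (simp add: finite_PiE)
  ultimately show ?thesis
    by (rule finite_subset)
next
  case False
  then have "{\<sigma> \<in> inj_maps n. conj_loc X I n g \<sigma> = r} = {}"
    by auto
  then show ?thesis
    by (simp only: finite.emptyI)
qed

definition factorizations :: "'x set \<Rightarrow> 'i set \<Rightarrow> nat \<Rightarrow> nat \<Rightarrow> (('x,'i) pt \<Rightarrow> ('x,'i) pt) \<Rightarrow> (('x,'i) pt \<Rightarrow> ('x,'i) pt)
    \<Rightarrow> ('x,'i) lbij \<Rightarrow> ((nat \<Rightarrow> nat) \<times> (nat \<Rightarrow> nat)) set" where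
  "factorizations X I n k g h r = {(\<sigma>, \<tau>). \<sigma> \<in> inj_maps n \<and> \<tau> \<in> inj_maps k \<and>
     lb_comp (conj_loc X I n g \<sigma>) (conj_loc X I k h \<tau>) = r}"

lemma fst_eq_if_factorization:
  "(\<sigma>, \<tau>) \<in> factorizations X I n k g h r \<Longrightarrow> fst r = \<sigma> ` {1..n} \<union> \<tau> ` {1..k}"
  by (auto simp: factorizations_def lb_comp_def)

lemma finite_factorizations: "finite (factorizations X I n k g h r)"
proof (cases "finite (fst r)")
  case True
  have "factorizations X I n k g h r \<subseteq> ({1..n} \<rightarrow>\<^sub>E fst r) \<times> ({1..k} \<rightarrow>\<^sub>E fst r)"
  proof
    fix x assume x: "x \<in> factorizations X I n k g h r"
    obtain \<sigma> \<tau> where x\<sigma>\<tau>: "x = (\<sigma>, \<tau>)"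
      by (cases x)
    have "fst r = \<sigma> ` {1..n} \<union> \<tau> ` {1..k}"
      using x unfolding x\<sigma>\<tau> by (rule fst_eq_if_factorization)
    moreover have "\<sigma> \<in> inj_maps n" "\<tau> \<in> inj_maps k"
      using x by (simp_all add: x\<sigma>\<tau> factorizations_def)
    ultimately show "x \<in> ({1..n} \<rightarrow>\<^sub>E fst r) \<times> ({1..k} \<rightarrow>\<^sub>E fst r)"
      by (auto simp: x\<sigma>\<tau> inj_maps_def PiE_def)
  qed
  moreover have "finite (({1..n} \<rightarrow>\<^sub>E fst r) \<times> ({1..k} \<rightarrow>\<^sub>E fst r))"
    using True by (simp add: finite_PiE)
  ultimately show ?thesis
    by (rule finite_subset)
next
  case False
  then have "factorizations X I n k g h r = {}"
    using fst_eq_if_factorization by fastforce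
  then show ?thesis
    by simp
qed

lemma conv_Bser_eq_card:
  "conv (Bser X I n g) (Bser X I k h) r = of_nat (card (factorizations X I n k g h r))"
proof -
  define fib where "fib m f p = {\<sigma> \<in> inj_maps m. conj_loc X I m f \<sigma> = p}" for m f p
  define T where "T = {(p, q). Bser X I n g p \<noteq> 0 \<and> Bser X I k h q \<noteq> 0 \<and> lb_comp p q = r}"
  have nonzero: "Bser X I m f p \<noteq> 0 \<longleftrightarrow> fib m f p \<noteq> {}" for m f p
    by (simp add: Bser_eq_card fib_def finite_conj_loc_fiber)
  have union: "factorizations X I n k g h r = (\<Union>(p, q)\<in>T. fib n g p \<times> fib k h q)"
    by (auto simp: factorizations_def T_def nonzero fib_def)
  have "T \<subseteq> (\<lambda>(\<sigma>, \<tau>). (conj_loc X I n g \<sigma>, conj_loc X I k h \<tau>)) ` factorizations X I n k g h r"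
    by (force simp: T_def nonzero fib_def factorizations_def)
  then have "finite T"
    by (rule finite_surj[OF finite_factorizations])
  have "conv (Bser X I n g) (Bser X I k h) r = (\<Sum>(p, q)\<in>T. of_nat (card (fib n g p \<times> fib k h q)))"
    unfolding conv_def T_def[symmetric]
    by (simp add: Bser_eq_card fib_def card_cartesian_product case_prod_beta)
  also have "\<dots> = of_nat (card (\<Union>(p, q)\<in>T. fib n g p \<times> fib k h q))"
    using \<open>finite T\<close> by (subst card_UN_disjoint)
      (auto simp: case_prod_beta fib_def finite_conj_loc_fiber of_nat_sum)
  finally show ?thesis
    by (simp add: union)
qed

definition pair_after :: "(nat \<Rightarrow> nat) \<Rightarrow> nat \<Rightarrow> nat \<Rightarrow> (nat \<Rightarrow> nat) \<times> (nat \<Rightarrow> nat)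
    \<Rightarrow> (nat \<Rightarrow> nat) \<times> (nat \<Rightarrow> nat)" where
  "pair_after \<rho> n k p = (restrict (\<rho> \<circ> fst p) {1..n}, restrict (\<rho> \<circ> snd p) {1..k})"

lemma inj_maps_comp:
  assumes "\<beta> \<in> {1..n} \<rightarrow>\<^sub>E {1..m}" "inj_on \<beta> {1..n}" "\<rho> \<in> inj_maps m"
  shows "restrict (\<rho> \<circ> \<beta>) {1..n} \<in> inj_maps n"
proof -
  have "\<beta> ` {1..n} \<subseteq> {1..m}" "\<rho> \<in> {1..m} \<rightarrow>\<^sub>E {1..}" "inj_on \<rho> {1..m}"
    using assms by (auto simp: inj_maps_def)
  then have "\<rho> \<circ> \<beta> \<in> {1..n} \<rightarrow> {1..}" "inj_on (\<rho> \<circ> \<beta>) {1..n}"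
    using assms(2) by (auto intro: comp_inj_on inj_on_subset dest!: PiE_mem)
  then show ?thesis
    by (simp add: inj_maps_def restrict_PiE_iff)
qed

lemma pair_after_in_inj_maps:
  assumes "(\<beta>, \<alpha>) \<in> covering_pairs n k m" "\<rho> \<in> inj_maps m"
  shows "fst (pair_after \<rho> n k (\<beta>, \<alpha>)) \<in> inj_maps n" "snd (pair_after \<rho> n k (\<beta>, \<alpha>)) \<in> inj_maps k"
  using covering_pairsD[OF assms(1)] assms(2) unfolding pair_after_def fst_conv snd_conv
  by (blast intro: inj_maps_comp)+

lemma image_pair_after:
  assumes "(\<beta>, \<alpha>) \<in> covering_pairs n k m"
  shows "\<rho> ` {1..m} = fst (pair_after \<rho> n k (\<beta>, \<alpha>)) ` {1..n} \<union> snd (pair_after \<rho> n k (\<beta>, \<alpha>)) ` {1..k}"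
  unfolding pair_after_def fst_conv snd_conv image_restrict_eq image_comp[symmetric]
  by (simp only: covering_pairsD(7)[OF assms] flip: image_Un)

lemma Bser_glue_eq_card:
  assumes p: "(\<beta>, \<alpha>) \<in> covering_pairs n k m"
    and g: "supported_on X I {1..n} g" and h: "supported_on X I {1..k} h"
  shows "Bser X I m (glue X I n k g h (\<beta>, \<alpha>)) r =
         of_nat (card {\<rho> \<in> inj_maps m. pair_after \<rho> n k (\<beta>, \<alpha>) \<in> factorizations X I n k g h r})"
proof -
  have "conj_loc X I m (glue X I n k g h (\<beta>, \<alpha>)) \<rho> = r \<longleftrightarrow> pair_after \<rho> n k (\<beta>, \<alpha>) \<in> factorizations X I n k g h r"
    if \<rho>: "\<rho> \<in> inj_maps m" for \<rho>
  proof -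
    have "conj_loc X I n g (fst (pair_after \<rho> n k (\<beta>, \<alpha>))) = conj_loc X I n g (\<rho> \<circ> \<beta>)"
      "conj_loc X I k h (snd (pair_after \<rho> n k (\<beta>, \<alpha>))) = conj_loc X I k h (\<rho> \<circ> \<alpha>)"
      by (auto intro: conj_loc_cong g h simp: pair_after_def)
    moreover have "inj_on \<rho> {1..m}"
      using \<rho> by (simp add: inj_maps_def)
    ultimately show ?thesis
      using pair_after_in_inj_maps[OF p \<rho>] conj_loc_glue[OF p _ g h]
      by (simp add: factorizations_def split_beta)
  qed
  then show ?thesis
    unfolding Bser_eq_card by (intro arg_cong[where f = "\<lambda>A. of_nat (card A)"] Collect_cong) blast
qed

lemma restrict_comp_cancel:
  assumes "inj_on \<rho> {1..m}" "\<beta> \<in> {1..n} \<rightarrow>\<^sub>E {1..m}" "\<beta>' \<in> {1..n} \<rightarrow>\<^sub>E {1..m}"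
    and "restrict (\<rho> \<circ> \<beta>) {1..n} = restrict (\<rho> \<circ> \<beta>') {1..n}"
  shows "\<beta> = \<beta>'"
proof (rule PiE_ext[OF assms(2,3)])
  fix j assume "j \<in> {1..n}"
  then have "\<rho> (\<beta> j) = \<rho> (\<beta>' j)" "\<beta> j \<in> {1..m}" "\<beta>' j \<in> {1..m}"
    using fun_cong[OF assms(4), of j] assms(2,3) by auto
  then show "\<beta> j = \<beta>' j"
    using assms(1) by (auto dest: inj_onD)
qed

lemma restrict_comp_inv_into:
  assumes \<sigma>: "\<sigma> \<in> inj_maps n" and \<rho>: "\<rho> \<in> inj_maps m" and sub: "\<sigma> ` {1..n} \<subseteq> \<rho> ` {1..m}"
  defines "\<beta> \<equiv> restrict (inv_into {1..m} \<rho> \<circ> \<sigma>) {1..n}"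
  shows "\<beta> \<in> {1..n} \<rightarrow>\<^sub>E {1..m}" "inj_on \<beta> {1..n}" "\<beta> ` {1..n} = inv_into {1..m} \<rho> ` \<sigma> ` {1..n}"
    "restrict (\<rho> \<circ> \<beta>) {1..n} = \<sigma>"
proof -
  show "\<beta> \<in> {1..n} \<rightarrow>\<^sub>E {1..m}"
    unfolding \<beta>_def restrict_PiE_iff
  proof
    fix j assume "j \<in> {1..n}"
    then have "\<sigma> j \<in> \<rho> ` {1..m}"
      using sub by auto
    then show "(inv_into {1..m} \<rho> \<circ> \<sigma>) j \<in> {1..m}"
      unfolding comp_apply by (rule inv_into_into)
  qed
  have "inj_on (inv_into {1..m} \<rho>) (\<sigma> ` {1..n})"
    using sub by (rule inj_on_subset[OF inj_on_inv_into]) simp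
  then show "inj_on \<beta> {1..n}"
    using \<sigma> unfolding \<beta>_def inj_on_restrict_eq by (auto intro: comp_inj_on simp: inj_maps_def)
  show "\<beta> ` {1..n} = inv_into {1..m} \<rho> ` \<sigma> ` {1..n}"
    by (simp add: \<beta>_def image_comp)
  show "restrict (\<rho> \<circ> \<beta>) {1..n} = \<sigma>"
  proof
    fix j
    show "restrict (\<rho> \<circ> \<beta>) {1..n} j = \<sigma> j"
    proof (cases "j \<in> {1..n}")
      case True
      then have "\<sigma> j \<in> \<rho> ` {1..m}"
        using sub by auto
      then show ?thesis
        using True by (simp add: \<beta>_def f_inv_into_f)
    next
      case False
      then show ?thesis
        using PiE_arb[of \<sigma> "{1..n}" "\<lambda>_. {1..}" j] \<sigma> by (auto simp: inj_maps_def)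
    qed
  qed
qed

lemma inj_on_pair_after:
  assumes p: "(\<beta>, \<alpha>) \<in> covering_pairs n k m"
  shows "inj_on (\<lambda>\<rho>. pair_after \<rho> n k (\<beta>, \<alpha>)) (inj_maps m)"
proof (rule inj_onI)
  fix \<rho> \<rho>' assume \<rho>: "\<rho> \<in> inj_maps m" "\<rho>' \<in> inj_maps m"
    and eq: "pair_after \<rho> n k (\<beta>, \<alpha>) = pair_after \<rho>' n k (\<beta>, \<alpha>)"
  have "\<rho> (\<beta> j) = \<rho>' (\<beta> j)" if "j \<in> {1..n}" for j
    using fun_cong[OF arg_cong[where f = fst, OF eq], of j] that by (simp add: pair_after_def)
  moreover have "\<rho> (\<alpha> j) = \<rho>' (\<alpha> j)" if "j \<in> {1..k}" for j
    using fun_cong[OF arg_cong[where f = snd, OF eq], of j] that by (simp add: pair_after_def)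
  ultimately have "\<rho> x = \<rho>' x" if "x \<in> \<beta> ` {1..n} \<union> \<alpha> ` {1..k}" for x
    using that by blast
  then show "\<rho> = \<rho>'"
    using \<rho> covering_pairsD(7)[OF p] by (intro PiE_ext[of _ "{1..m}" "\<lambda>_. {1..}"]) (auto simp: inj_maps_def)
qed

lemma pair_after_cancel:
  assumes "\<rho> \<in> inj_maps m" "p \<in> covering_pairs n k m" "p' \<in> covering_pairs n k m"
    and "pair_after \<rho> n k p = pair_after \<rho> n k p'"
  shows "p = p'"
  using assms restrict_comp_cancel[of \<rho> m "fst p" n "fst p'"] restrict_comp_cancel[of \<rho> m "snd p" k "snd p'"]
  by (auto simp: inj_maps_def covering_pairs_def pair_after_def prod_eq_iff)

lemma pair_after_surj:
  assumes \<sigma>: "\<sigma> \<in> inj_maps n" and \<tau>: "\<tau> \<in> inj_maps k" and \<rho>: "\<rho> \<in> inj_maps m"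
    and im: "\<rho> ` {1..m} = \<sigma> ` {1..n} \<union> \<tau> ` {1..k}"
  obtains p where "p \<in> covering_pairs n k m" "pair_after \<rho> n k p = (\<sigma>, \<tau>)"
proof -
  define \<beta> where "\<beta> = restrict (inv_into {1..m} \<rho> \<circ> \<sigma>) {1..n}"
  define \<alpha> where "\<alpha> = restrict (inv_into {1..m} \<rho> \<circ> \<tau>) {1..k}"
  have "\<sigma> ` {1..n} \<subseteq> \<rho> ` {1..m}" "\<tau> ` {1..k} \<subseteq> \<rho> ` {1..m}"
    using im by auto
  note B = restrict_comp_inv_into[OF \<sigma> \<rho> this(1), folded \<beta>_def]
    and A = restrict_comp_inv_into[OF \<tau> \<rho> this(2), folded \<alpha>_def]
  have "\<beta> ` {1..n} \<union> \<alpha> ` {1..k} = inv_into {1..m} \<rho> ` \<rho> ` {1..m}"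
    by (simp add: A(3) B(3) im image_Un)
  also have "\<dots> = {1..m}"
    using \<rho> by (simp add: inj_maps_def)
  finally have "(\<beta>, \<alpha>) \<in> covering_pairs n k m"
    using A(1,2) B(1,2) by (simp add: covering_pairs_def)
  moreover have "pair_after \<rho> n k (\<beta>, \<alpha>) = (\<sigma>, \<tau>)"
    by (simp add: pair_after_def A(4) B(4))
  ultimately show ?thesis
    by (rule that)
qed

lemma card_inj_maps_onto:
  assumes U: "finite U" "U \<subseteq> {1..}"
  shows "card {\<rho> \<in> inj_maps m. \<rho> ` {1..m} = U} = (if card U = m then fact m else 0)"
proof (cases "card U = m")
  case True
  have "{\<rho> \<in> inj_maps m. \<rho> ` {1..m} = U} = {\<rho> \<in> {1..m} \<rightarrow>\<^sub>E U. inj_on \<rho> {1..m}}"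
  proof (intro set_eqI iffI)
    fix \<rho> assume "\<rho> \<in> {\<rho> \<in> {1..m} \<rightarrow>\<^sub>E U. inj_on \<rho> {1..m}}"
    then have \<rho>: "\<rho> \<in> {1..m} \<rightarrow>\<^sub>E U" "inj_on \<rho> {1..m}"
      by simp_all
    then have "\<rho> ` {1..m} = U"
      using True U(1) by (intro card_subset_eq) (auto simp: card_image)
    then show "\<rho> \<in> {\<rho> \<in> inj_maps m. \<rho> ` {1..m} = U}"
      using \<rho> U(2) by (auto simp: inj_maps_def PiE_def)
  qed (auto simp: inj_maps_def PiE_def)
  then show ?thesis
    using True U(1) card_inj_on_subset_funcset[of "{1..m}" U "{1..m}"]
    by (simp add: fact_prod_rev[where 'a = nat])
next
  case False
  then have empty: "{\<rho> \<in> inj_maps m. \<rho> ` {1..m} = U} = {}"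
    by (auto simp: inj_maps_def card_image)
  show ?thesis
    using False by (simp add: empty)
qed

lemma image_eq_if_pair_after_factorization:
  assumes "p \<in> covering_pairs n k m" "pair_after \<rho> n k p \<in> factorizations X I n k g h r"
  shows "\<rho> ` {1..m} = fst r"
proof -
  have "\<rho> ` {1..m} = fst (pair_after \<rho> n k p) ` {1..n} \<union> snd (pair_after \<rho> n k p) ` {1..k}"
    using assms(1) image_pair_after[of "fst p" "snd p"] by simp
  also have "\<dots> = fst r"
    using assms(2) fst_eq_if_factorization[of "fst (pair_after \<rho> n k p)" "snd (pair_after \<rho> n k p)" X I n k g h r]
    by simp
  finally show ?thesis .
qed

lemma bij_betw_pair_after:
  fixes X :: "'x set" and I :: "'i set" and n k :: nat and g h :: "('x,'i) pt \<Rightarrow> ('x,'i) pt"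
    and r :: "('x,'i) lbij"
  defines "F \<equiv> factorizations X I n k g h r"
  shows "bij_betw (\<lambda>(p, \<rho>). (pair_after \<rho> n k p, \<rho>))
    (SIGMA p:covering_pairs n k m. {\<rho> \<in> inj_maps m. pair_after \<rho> n k p \<in> F})
    (F \<times> {\<rho> \<in> inj_maps m. \<rho> ` {1..m} = fst r})"
proof (rule bij_betw_imageI)
  show "inj_on (\<lambda>(p, \<rho>). (pair_after \<rho> n k p, \<rho>))
      (SIGMA p:covering_pairs n k m. {\<rho> \<in> inj_maps m. pair_after \<rho> n k p \<in> F})"
  proof (rule inj_onI)
    fix x y assume "x \<in> (SIGMA p:covering_pairs n k m. {\<rho> \<in> inj_maps m. pair_after \<rho> n k p \<in> F})"
      "y \<in> (SIGMA p:covering_pairs n k m. {\<rho> \<in> inj_maps m. pair_after \<rho> n k p \<in> F})"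
      and "(\<lambda>(p, \<rho>). (pair_after \<rho> n k p, \<rho>)) x = (\<lambda>(p, \<rho>). (pair_after \<rho> n k p, \<rho>)) y"
    then show "x = y"
      using pair_after_cancel[of "snd x" m "fst x" n k "fst y"] by (auto simp: split_beta prod_eq_iff)
  qed
  show "(\<lambda>(p, \<rho>). (pair_after \<rho> n k p, \<rho>)) ` (SIGMA p:covering_pairs n k m. {\<rho> \<in> inj_maps m. pair_after \<rho> n k p \<in> F})
      = F \<times> {\<rho> \<in> inj_maps m. \<rho> ` {1..m} = fst r}"
  proof (intro equalityI subsetI)
    fix x assume "x \<in> (\<lambda>(p, \<rho>). (pair_after \<rho> n k p, \<rho>)) `
      (SIGMA p:covering_pairs n k m. {\<rho> \<in> inj_maps m. pair_after \<rho> n k p \<in> F})"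
    then obtain p \<rho> where "p \<in> covering_pairs n k m" "\<rho> \<in> inj_maps m" "pair_after \<rho> n k p \<in> F"
      "x = (pair_after \<rho> n k p, \<rho>)"
      by auto
    then show "x \<in> F \<times> {\<rho> \<in> inj_maps m. \<rho> ` {1..m} = fst r}"
      using image_eq_if_pair_after_factorization[of p n k m \<rho> X I g h r] by (simp add: F_def)
  next
    fix x assume "x \<in> F \<times> {\<rho> \<in> inj_maps m. \<rho> ` {1..m} = fst r}"
    then obtain \<sigma> \<tau> \<rho> where x: "x = ((\<sigma>, \<tau>), \<rho>)" and st: "(\<sigma>, \<tau>) \<in> F"
      and \<rho>: "\<rho> \<in> inj_maps m" "\<rho> ` {1..m} = fst r"
      by auto
    have inj: "\<sigma> \<in> inj_maps n" "\<tau> \<in> inj_maps k"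
      using st by (simp_all add: F_def factorizations_def)
    have "\<rho> ` {1..m} = \<sigma> ` {1..n} \<union> \<tau> ` {1..k}"
      using \<rho>(2) fst_eq_if_factorization st by (simp add: F_def)
    then obtain p where "p \<in> covering_pairs n k m" "pair_after \<rho> n k p = (\<sigma>, \<tau>)"
      by (rule pair_after_surj[OF inj \<rho>(1)])
    then show "x \<in> (\<lambda>(p, \<rho>). (pair_after \<rho> n k p, \<rho>)) `
        (SIGMA p:covering_pairs n k m. {\<rho> \<in> inj_maps m. pair_after \<rho> n k p \<in> F})"
      using st \<rho> by (auto simp: x intro!: image_eqI[of _ _ "(p, \<rho>)"])
  qed
qed

lemma sum_card_pair_after:
  "(\<Sum>p\<in>covering_pairs n k m. card {\<rho> \<in> inj_maps m. pair_after \<rho> n k p \<in> factorizations X I n k g h r})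
   = card (factorizations X I n k g h r) * card {\<rho> \<in> inj_maps m. \<rho> ` {1..m} = fst r}"
proof -
  define S where "S p = {\<rho> \<in> inj_maps m. pair_after \<rho> n k p \<in> factorizations X I n k g h r}" for p
  have "finite (S p)" if p: "p \<in> covering_pairs n k m" for p
  proof (rule finite_imageD)
    show "finite ((\<lambda>\<rho>. pair_after \<rho> n k p) ` S p)"
      by (rule finite_subset[OF _ finite_factorizations[of X I n k g h r]]) (auto simp: S_def)
    show "inj_on (\<lambda>\<rho>. pair_after \<rho> n k p) (S p)"
      using p inj_on_pair_after[of "fst p" "snd p"] by (auto simp: S_def intro: inj_on_subset)
  qed
  then have "(\<Sum>p\<in>covering_pairs n k m. card (S p)) = card (SIGMA p:covering_pairs n k m. S p)"
    by (simp add: card_SigmaI finite_covering_pairs)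
  also have "\<dots> = card (factorizations X I n k g h r \<times> {\<rho> \<in> inj_maps m. \<rho> ` {1..m} = fst r})"
    unfolding S_def by (rule bij_betw_same_card[OF bij_betw_pair_after])
  finally show ?thesis
    by (simp add: S_def card_cartesian_product)
qed

lemma inj_maps_image:
  assumes "\<sigma> \<in> inj_maps n"
  shows "card (\<sigma> ` {1..n}) = n" "\<sigma> ` {1..n} \<subseteq> {1..}"
  using assms by (auto simp: inj_maps_def card_image PiE_def Pi_def)

section \<open>The leading term\<close>

definition block_pair :: "nat \<Rightarrow> nat \<Rightarrow> (nat \<Rightarrow> nat) \<times> (nat \<Rightarrow> nat)" where
  "block_pair n k = (restrict (\<lambda>j. j + k) {1..n}, restrict (\<lambda>j. j) {1..k})"

lemma block_pair_covering: "block_pair n k \<in> covering_pairs n k (n + k)"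
proof -
  have "(\<lambda>j. j + k) ` {1..n} \<union> {1..k} = {1..n + k}"
  proof (intro equalityI subsetI)
    fix j assume "j \<in> {1..n + k}"
    then show "j \<in> (\<lambda>j. j + k) ` {1..n} \<union> {1..k}"
      by (cases "j \<le> k") (auto intro: image_eqI[of _ _ "j - k"])
  qed auto
  then show ?thesis
    by (auto simp: covering_pairs_def block_pair_def inj_on_def)
qed

lemma lb_comp_shift_eq_glue:
  assumes "supported_on X I {1..n} g" "supported_on X I {1..k} h"
  shows "lb_comp (conj_loc X I n g (\<lambda>j. j + k)) ({1..k}, h) = ({1..n + k}, glue X I n k g h (block_pair n k))"
proof -
  have "conj_loc X I n g (\<lambda>j. j + k) = conj_loc X I n g (fst (block_pair n k))"
    by (rule conj_loc_cong[OF _ assms(1)]) (simp add: block_pair_def)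
  moreover have "conj_loc X I k h (snd (block_pair n k)) = conj_loc X I k h (\<lambda>j. j)"
    by (rule conj_loc_cong[OF _ assms(2)]) (simp add: block_pair_def)
  ultimately have "conj_loc X I n g (\<lambda>j. j + k) = conj_loc X I n g (fst (block_pair n k))"
    "({1..k}, h) = conj_loc X I k h (snd (block_pair n k))"
    using conj_loc_ident[OF assms(2)] by simp_all
  then show ?thesis
    using covering_pairsD(7)[of "fst (block_pair n k)" "snd (block_pair n k)"] block_pair_covering[of n k]
    by (simp add: lb_comp_def glue_def)
qed

lemma card_factorization_overlap:
  assumes "(\<sigma>, \<tau>) \<in> factorizations X I n k g h r"
  shows "card (fst r) + card (\<sigma> ` {1..n} \<inter> \<tau> ` {1..k}) = n + k" "finite (fst r)" "fst r \<subseteq> {1..}"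
proof -
  have "\<sigma> \<in> inj_maps n" "\<tau> \<in> inj_maps k"
    using assms by (simp_all add: factorizations_def)
  then have "card (\<sigma> ` {1..n}) = n" "card (\<tau> ` {1..k}) = k" "\<sigma> ` {1..n} \<union> \<tau> ` {1..k} \<subseteq> {1..}"
    by (simp_all add: inj_maps_image)
  then show "card (fst r) + card (\<sigma> ` {1..n} \<inter> \<tau> ` {1..k}) = n + k" "finite (fst r)" "fst r \<subseteq> {1..}"
    using card_Un_Int[of "\<sigma> ` {1..n}" "\<tau> ` {1..k}"] fst_eq_if_factorization[OF assms] by simp_all
qed

lemma inj_on_join:
  fixes n k :: nat
  assumes \<sigma>: "inj_on \<sigma> {1..n}" and \<tau>: "inj_on \<tau> {1..k}" and disj: "\<sigma> ` {1..n} \<inter> \<tau> ` {1..k} = {}"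
  shows "inj_on (\<lambda>j. if j \<le> k then \<tau> j else \<sigma> (j - k)) {1..n + k}"
proof (rule inj_onI)
  fix x y assume x: "x \<in> {1..n + k}" and y: "y \<in> {1..n + k}"
    and eq: "(if x \<le> k then \<tau> x else \<sigma> (x - k)) = (if y \<le> k then \<tau> y else \<sigma> (y - k))"
  show "x = y"
  proof (cases "x \<le> k"; cases "y \<le> k")
    assume "x \<le> k" "y \<le> k"
    then show ?thesis
      using x y eq \<tau> by (auto dest: inj_onD)
  next
    assume "\<not> x \<le> k" "\<not> y \<le> k"
    with eq have "\<sigma> (x - k) = \<sigma> (y - k)"
      by simp
    moreover have "x - k \<in> {1..n}" "y - k \<in> {1..n}"
      using x y \<open>\<not> x \<le> k\<close> \<open>\<not> y \<le> k\<close> by auto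
    ultimately have "x - k = y - k"
      by (rule inj_onD[OF \<sigma>])
    with \<open>\<not> x \<le> k\<close> \<open>\<not> y \<le> k\<close> show ?thesis
      by simp
  next
    assume "x \<le> k" "\<not> y \<le> k"
    then have "\<tau> x = \<sigma> (y - k)" "x \<in> {1..k}" "y - k \<in> {1..n}"
      using x y eq by auto
    with disj show ?thesis
      by (metis disjoint_iff imageI)
  next
    assume "\<not> x \<le> k" "y \<le> k"
    then have "\<tau> y = \<sigma> (x - k)" "y \<in> {1..k}" "x - k \<in> {1..n}"
      using x y eq by auto
    with disj show ?thesis
      by (metis disjoint_iff imageI)
  qed
qed

lemma join_inj_maps:
  assumes \<sigma>: "\<sigma> \<in> inj_maps n" and \<tau>: "\<tau> \<in> inj_maps k" and disj: "\<sigma> ` {1..n} \<inter> \<tau> ` {1..k} = {}"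
  obtains \<rho> where "\<rho> \<in> inj_maps (n + k)" "pair_after \<rho> n k (block_pair n k) = (\<sigma>, \<tau>)"
proof
  define \<rho> where "\<rho> = restrict (\<lambda>j. if j \<le> k then \<tau> j else \<sigma> (j - k)) {1..n + k}"
  have "\<rho> j \<in> \<sigma> ` {1..n} \<union> \<tau> ` {1..k}" if "j \<in> {1..n + k}" for j
    using that by (cases "j \<le> k") (auto simp: \<rho>_def intro!: image_eqI[where x = "j - k"])
  then have "\<rho> ` {1..n + k} \<subseteq> {1..}"
    using inj_maps_image(2)[OF \<sigma>] inj_maps_image(2)[OF \<tau>] by blast
  then have "\<rho> \<in> {1..n + k} \<rightarrow>\<^sub>E {1..}"
    unfolding image_subset_iff by (simp add: \<rho>_def)
  moreover have "inj_on \<rho> {1..n + k}"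
    using inj_on_join[OF _ _ disj] \<sigma> \<tau> by (simp add: \<rho>_def inj_maps_def)
  ultimately show "\<rho> \<in> inj_maps (n + k)"
    by (simp add: inj_maps_def)
  have "restrict (\<rho> \<circ> fst (block_pair n k)) {1..n} j = \<sigma> j"
    "restrict (\<rho> \<circ> snd (block_pair n k)) {1..k} j = \<tau> j" for j
    using PiE_arb[of \<sigma> "{1..n}" "\<lambda>_. {1..}" j] PiE_arb[of \<tau> "{1..k}" "\<lambda>_. {1..}" j] \<sigma> \<tau>
    by (auto simp: \<rho>_def block_pair_def inj_maps_def)
  then show "pair_after \<rho> n k (block_pair n k) = (\<sigma>, \<tau>)"
    unfolding pair_after_def by (simp add: fun_eq_iff)
qed

lemma Bser_block_eq_card:
  assumes g: "supported_on X I {1..n} g" and h: "supported_on X I {1..k} h"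
  shows "Bser X I (n + k) (glue X I n k g h (block_pair n k)) r =
    of_nat (card {x \<in> factorizations X I n k g h r. fst x ` {1..n} \<inter> snd x ` {1..k} = {}})"
proof -
  define F where "F = factorizations X I n k g h r"
  define A where "A = {\<rho> \<in> inj_maps (n + k). pair_after \<rho> n k (block_pair n k) \<in> F}"
  have B: "(fst (block_pair n k), snd (block_pair n k)) \<in> covering_pairs n k (n + k)"
    by (simp add: block_pair_covering)
  have "bij_betw (\<lambda>\<rho>. pair_after \<rho> n k (block_pair n k)) A {x \<in> F. fst x ` {1..n} \<inter> snd x ` {1..k} = {}}"
  proof (rule bij_betw_imageI)
    show "inj_on (\<lambda>\<rho>. pair_after \<rho> n k (block_pair n k)) A"
      using inj_on_pair_after[OF B, simplified] by (rule inj_on_subset) (auto simp: A_def)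
    show "(\<lambda>\<rho>. pair_after \<rho> n k (block_pair n k)) ` A = {x \<in> F. fst x ` {1..n} \<inter> snd x ` {1..k} = {}}"
    proof (intro equalityI subsetI)
      fix x assume "x \<in> (\<lambda>\<rho>. pair_after \<rho> n k (block_pair n k)) ` A"
      then obtain \<rho> where \<rho>: "\<rho> \<in> A" and x: "x = pair_after \<rho> n k (block_pair n k)"
        by blast
      have "fst x ` {1..n} = \<rho> ` (\<lambda>j. j + k) ` {1..n}"
        by (simp add: x pair_after_def block_pair_def image_comp del: image_add_atLeastAtMost')
      then have "fst x ` {1..n} = \<rho> ` {1 + k..n + k}" "snd x ` {1..k} = \<rho> ` {1..k}"
        by (simp_all add: x pair_after_def block_pair_def)
      moreover have "inj_on \<rho> {1..n + k}"
        using \<rho> by (simp add: A_def inj_maps_def)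
      ultimately have "fst x ` {1..n} \<inter> snd x ` {1..k} = \<rho> ` ({1 + k..n + k} \<inter> {1..k})"
        using inj_on_image_Int[of \<rho> "{1..n + k}" "{1 + k..n + k}" "{1..k}"] by auto
      then show "x \<in> {x \<in> F. fst x ` {1..n} \<inter> snd x ` {1..k} = {}}"
        using \<rho> x by (auto simp: A_def)
    next
      fix x assume x: "x \<in> {x \<in> F. fst x ` {1..n} \<inter> snd x ` {1..k} = {}}"
      then have "fst x \<in> inj_maps n" "snd x \<in> inj_maps k"
        by (auto simp: F_def factorizations_def)
      then obtain \<rho> where "\<rho> \<in> inj_maps (n + k)" "pair_after \<rho> n k (block_pair n k) = x"
        using x by (auto elim: join_inj_maps)
      then show "x \<in> (\<lambda>\<rho>. pair_after \<rho> n k (block_pair n k)) ` A"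
        using x by (auto simp: A_def)
    qed
  qed
  then show ?thesis
    using Bser_glue_eq_card[OF B g h, of r, simplified] by (simp add: bij_betw_same_card A_def F_def)
qed

lemma Bser_block_eq:
  assumes g: "supported_on X I {1..n} g" and h: "supported_on X I {1..k} h"
  shows "Bser X I (n + k) (glue X I n k g h (block_pair n k)) r =
    (if card (fst r) = n + k then of_nat (card (factorizations X I n k g h r)) else 0)"
proof -
  define F where "F = factorizations X I n k g h r"
  have overlap: "fst x ` {1..n} \<inter> snd x ` {1..k} = {} \<longleftrightarrow> card (fst r) = n + k" if "x \<in> F" for x
  proof -
    have "card (fst r) + card (fst x ` {1..n} \<inter> snd x ` {1..k}) = n + k"
      using card_factorization_overlap(1)[of "fst x" "snd x" X I n k g h r] that by (simp add: F_def)
    moreover have "card (fst x ` {1..n} \<inter> snd x ` {1..k}) = 0 \<longleftrightarrow> fst x ` {1..n} \<inter> snd x ` {1..k} = {}"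
      by simp
    ultimately show ?thesis
      by linarith
  qed
  have "{x \<in> F. fst x ` {1..n} \<inter> snd x ` {1..k} = {}} = (if card (fst r) = n + k then F else {})"
    using overlap by auto
  then show ?thesis
    by (simp add: Bser_block_eq_card[OF g h] F_def)
qed

lemma sum_Bser_glue:
  assumes g: "supported_on X I {1..n} g" and h: "supported_on X I {1..k} h"
  shows "(\<Sum>p\<in>covering_pairs n k m. Bser X I m (glue X I n k g h p) r) =
    of_nat (card (factorizations X I n k g h r)) * (if card (fst r) = m then fact m else 0)"
proof -
  have Bser_glue_p: "Bser X I m (glue X I n k g h p) r =
      of_nat (card {\<rho> \<in> inj_maps m. pair_after \<rho> n k p \<in> factorizations X I n k g h r})"
    if "p \<in> covering_pairs n k m" for p
    using that Bser_glue_eq_card[OF _ g h, of "fst p" "snd p"] by simp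
  then have "(\<Sum>p\<in>covering_pairs n k m. Bser X I m (glue X I n k g h p) r) =
      of_nat (card (factorizations X I n k g h r) * card {\<rho> \<in> inj_maps m. \<rho> ` {1..m} = fst r})"
    by (simp add: sum_card_pair_after flip: of_nat_sum)
  moreover have "card (factorizations X I n k g h r) * card {\<rho> \<in> inj_maps m. \<rho> ` {1..m} = fst r}
      = card (factorizations X I n k g h r) * (if card (fst r) = m then fact m else 0)"
  proof (cases "factorizations X I n k g h r = {}")
    case False
    then obtain \<sigma> \<tau> where "(\<sigma>, \<tau>) \<in> factorizations X I n k g h r"
      by auto
    note r = card_factorization_overlap(2,3)[OF this]
    show ?thesis
      using card_inj_maps_onto[OF r] by simp
  qed simp
  ultimately show ?thesis
    by simp
qed

lemma conv_Bser_minus_leading: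
  assumes g: "supported_on X I {1..n} g" and h: "supported_on X I {1..k} h"
  shows "conv (Bser X I n g) (Bser X I k h) r - Bser X I (n + k) (glue X I n k g h (block_pair n k)) r
    = (\<Sum>m<n + k. \<Sum>p\<in>covering_pairs n k m. inverse (fact m) * Bser X I m (glue X I n k g h p) r)"
proof -
  define N where "N = card (factorizations X I n k g h r)"
  have le: "card (fst r) \<le> n + k" if "N \<noteq> 0"
  proof -
    obtain x where "x \<in> factorizations X I n k g h r"
      using \<open>N \<noteq> 0\<close> by (metis N_def card.empty ex_in_conv)
    then show ?thesis
      using card_factorization_overlap(1)[of "fst x" "snd x" X I n k g h r] by simp
  qed
  have "(\<Sum>m<n + k. \<Sum>p\<in>covering_pairs n k m. inverse (fact m) * Bser X I m (glue X I n k g h p) r)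
      = (\<Sum>m<n + k. inverse (fact m) * (of_nat N * (if card (fst r) = m then fact m else 0)))"
    by (simp add: sum_distrib_left[symmetric] sum_Bser_glue[OF g h] N_def)
  also have "\<dots> = (\<Sum>m<n + k. if card (fst r) = m then of_nat N else 0)"
    by (intro sum.cong) auto
  also have "\<dots> = (if card (fst r) < n + k then of_nat N else 0)"
    by simp
  also have "\<dots> = of_nat N - (if card (fst r) = n + k then of_nat N else 0)"
    using le by (cases "N = 0") auto
  finally show ?thesis
    by (simp add: conv_Bser_eq_card Bser_block_eq[OF g h] N_def)
qed

section \<open>The filtration\<close>

interpretation series: module "\<lambda>(c::complex) (f::'a \<Rightarrow> complex) r. c * f r"
  by unfold_locales (auto simp: fun_eq_iff algebra_simps)

lemma sum_fun_eq: "(\<Sum>a\<in>A. f a) = (\<lambda>x. \<Sum>a\<in>A. f a x)"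
  by (induction A rule: infinite_finite_induct) (auto simp: fun_eq_iff)

lemma lin_span_eq_span: "lin_span A = series.span A"
  unfolding lin_span_def series.span_explicit sum_fun_eq ..

lemma Bfilt_mono: "m \<le> m' \<Longrightarrow> Bfilt X I G m \<subseteq> Bfilt X I G m'"
  unfolding Bfilt_def lin_span_eq_span by (rule series.span_mono) force

lemma Bser_in_Bfilt: "int j \<le> m \<Longrightarrow> g \<in> Gn X I G j \<Longrightarrow> Bser X I j g \<in> Bfilt X I G m"
  unfolding Bfilt_def lin_span_eq_span by (rule series.span_base) auto

lemma Bfilt_add: "x \<in> Bfilt X I G m \<Longrightarrow> y \<in> Bfilt X I G m \<Longrightarrow> (\<lambda>r. x r + y r) \<in> Bfilt X I G m"
  using series.span_add[of x _ y] by (simp add: Bfilt_def lin_span_eq_span plus_fun_def)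

lemma Bfilt_diff: "x \<in> Bfilt X I G m \<Longrightarrow> y \<in> Bfilt X I G m \<Longrightarrow> (\<lambda>r. x r - y r) \<in> Bfilt X I G m"
  using series.span_diff[of x _ y] by (simp add: Bfilt_def lin_span_eq_span fun_diff_def)

lemma Bfilt_scale: "x \<in> Bfilt X I G m \<Longrightarrow> (\<lambda>r. c * x r) \<in> Bfilt X I G m"
  using series.span_scale[of x _ c] by (simp add: Bfilt_def lin_span_eq_span)

lemma Bfilt_sum:
  "(\<And>t. t \<in> T \<Longrightarrow> f t \<in> Bfilt X I G m) \<Longrightarrow> (\<lambda>r. \<Sum>t\<in>T. f t r) \<in> Bfilt X I G m"
  using series.span_sum[of T f] by (simp add: Bfilt_def lin_span_eq_span sum_fun_eq)

lemma conv_Bser_minus_leading_in_Bfilt: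
  assumes adm: "admissible_group X I G" and g: "g \<in> Gn X I G n" and h: "h \<in> Gn X I G k"
  shows "(\<lambda>r. conv (Bser X I n g) (Bser X I k h) r - Bser X I (n + k) (glue X I n k g h (block_pair n k)) r)
    \<in> Bfilt X I G (int (n + k) - 1)"
proof -
  have "glue X I n k g h p \<in> Gn X I G m" if "p \<in> covering_pairs n k m" for p m
    using that glue_in_Gn[OF adm _ g h, of "fst p" "snd p"] by simp
  then have "(\<lambda>r. \<Sum>m<n + k. \<Sum>p\<in>covering_pairs n k m. inverse (fact m) * Bser X I m (glue X I n k g h p) r)
      \<in> Bfilt X I G (int (n + k) - 1)"
    by (auto intro!: Bfilt_sum Bfilt_scale Bser_in_Bfilt)
  then show ?thesis
    using conv_Bser_minus_leading[OF Gn_supported_on[OF adm g] Gn_supported_on[OF adm h]] by simp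
qed

lemma leading_term_conv_Bser:
  assumes adm: "admissible_group X I G" and g: "g \<in> Gn X I G n" and h: "h \<in> Gn X I G k"
  shows "let \<nu> = lb_comp (conj_loc X I n g (\<lambda>j. j + k)) ({1..k}, h) in
    fst \<nu> = {1..n + k} \<and> snd \<nu> \<in> Gn X I G (n + k) \<and>
    (\<lambda>r. conv (Bser X I n g) (Bser X I k h) r - Bser X I (n + k) (snd \<nu>) r) \<in> Bfilt X I G (int (n + k) - 1)"
  using conv_Bser_minus_leading_in_Bfilt[OF adm g h]
    glue_in_Gn[OF adm _ g h, of "fst (block_pair n k)" "snd (block_pair n k)"]
    lb_comp_shift_eq_glue[OF Gn_supported_on[OF adm g] Gn_supported_on[OF adm h]] block_pair_covering[of n k]
  by simp

section \<open>Commutativity of the graded algebra for \<open>X = \<emptyset>\<close>\<close>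

text \<open>Since \<open>conv\<close> sums over a set that may be infinite (and a sum over an infinite set is \<open>0\<close>),
  convolution is bilinear only on series with this finiteness property.\<close>
definition locally_finite :: "('x,'i) series \<Rightarrow> bool" where
  "locally_finite a \<longleftrightarrow>
     (\<forall>p. a p \<noteq> 0 \<longrightarrow> finite (fst p)) \<and> (\<forall>F. finite F \<longrightarrow> finite {p. a p \<noteq> 0 \<and> fst p \<subseteq> F})"

lemma locally_finite_Bser: "locally_finite (Bser X I n g)"
proof -
  have nonzero: "\<exists>\<sigma>\<in>inj_maps n. conj_loc X I n g \<sigma> = p" if "Bser X I n g p \<noteq> 0" for p
    using that by (auto simp: Bser_eq_card card_gt_0_iff)
  have "finite {p. Bser X I n g p \<noteq> 0 \<and> fst p \<subseteq> F}" if "finite F" for F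
  proof (rule finite_subset)
    show "{p. Bser X I n g p \<noteq> 0 \<and> fst p \<subseteq> F} \<subseteq> conj_loc X I n g ` ({1..n} \<rightarrow>\<^sub>E F)"
    proof
      fix p assume p: "p \<in> {p. Bser X I n g p \<noteq> 0 \<and> fst p \<subseteq> F}"
      then obtain \<sigma> where \<sigma>: "\<sigma> \<in> inj_maps n" "conj_loc X I n g \<sigma> = p"
        using nonzero by blast
      with p have "\<sigma> \<in> {1..n} \<rightarrow>\<^sub>E F"
        by (auto simp: inj_maps_def PiE_def)
      with \<sigma>(2) show "p \<in> conj_loc X I n g ` ({1..n} \<rightarrow>\<^sub>E F)"
        by blast
    qed
  qed (use that in \<open>simp add: finite_PiE\<close>)
  moreover have "finite (fst p)" if "Bser X I n g p \<noteq> 0" for p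
    using nonzero[OF that] by auto
  ultimately show ?thesis
    by (simp add: locally_finite_def)
qed

lemma lin_comb_nonzero:
  fixes c :: "_ \<Rightarrow> 'a::semiring_0"
  assumes "(\<Sum>s\<in>S. c s * s p) \<noteq> 0"
  shows "\<exists>s\<in>S. s p \<noteq> 0"
proof (rule ccontr)
  assume zero: "\<not> (\<exists>s\<in>S. s p \<noteq> 0)"
  have "(\<Sum>s\<in>S. c s * s p) = 0"
  proof (rule sum.neutral, rule ballI)
    fix s assume "s \<in> S"
    with zero have "s p = 0"
      by blast
    then show "c s * s p = 0"
      by simp
  qed
  with assms show False
    by contradiction
qed

lemma locally_finite_lin_comb:
  assumes S: "finite S" "\<And>s. s \<in> S \<Longrightarrow> locally_finite s"
  shows "locally_finite (\<lambda>r. \<Sum>s\<in>S. c s * s r)"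
proof -
  note nonzero = lin_comb_nonzero[where S = S and c = c]
  have "finite (fst p)" if "(\<Sum>s\<in>S. c s * s p) \<noteq> 0" for p
    using nonzero[OF that] S(2) unfolding locally_finite_def by blast
  moreover have "finite {p. (\<Sum>s\<in>S. c s * s p) \<noteq> 0 \<and> fst p \<subseteq> F}" if "finite F" for F
  proof (rule finite_subset)
    show "{p. (\<Sum>s\<in>S. c s * s p) \<noteq> 0 \<and> fst p \<subseteq> F} \<subseteq> (\<Union>s\<in>S. {p. s p \<noteq> 0 \<and> fst p \<subseteq> F})"
      using nonzero by blast
    show "finite (\<Union>s\<in>S. {p. s p \<noteq> 0 \<and> fst p \<subseteq> F})"
      using S that by (auto simp: locally_finite_def)
  qed
  ultimately show ?thesis
    by (simp add: locally_finite_def)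
qed

lemma conv_eq_sum_superset:
  assumes A: "finite A" "{p. a p \<noteq> 0 \<and> fst p \<subseteq> fst r} \<subseteq> A"
    and B: "finite B" "{q. b q \<noteq> 0 \<and> fst q \<subseteq> fst r} \<subseteq> B"
  shows "conv a b r = (\<Sum>z\<in>{z \<in> A \<times> B. lb_comp (fst z) (snd z) = r}. a (fst z) * b (snd z))"
proof -
  have "conv a b r = (\<Sum>z\<in>{(p, q). a p \<noteq> 0 \<and> b q \<noteq> 0 \<and> lb_comp p q = r}. a (fst z) * b (snd z))"
    by (simp add: conv_def case_prod_beta')
  also have "\<dots> = (\<Sum>z\<in>{z \<in> A \<times> B. lb_comp (fst z) (snd z) = r}. a (fst z) * b (snd z))"
  proof (rule sum.mono_neutral_left)
    show "{(p, q). a p \<noteq> 0 \<and> b q \<noteq> 0 \<and> lb_comp p q = r} \<subseteq> {z \<in> A \<times> B. lb_comp (fst z) (snd z) = r}"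
      using A(2) B(2) by (auto simp: lb_comp_def)
  qed (use A B in auto)
  finally show ?thesis .
qed

lemma conv_infinite:
  assumes "locally_finite a" "locally_finite b" "infinite (fst r)"
  shows "conv a b r = 0"
proof -
  have "\<not> (a p \<noteq> 0 \<and> b q \<noteq> 0 \<and> lb_comp p q = r)" for p q
  proof
    assume pq: "a p \<noteq> 0 \<and> b q \<noteq> 0 \<and> lb_comp p q = r"
    then have "finite (fst p)" "finite (fst q)"
      using assms(1,2) unfolding locally_finite_def by blast+
    with pq assms(3) show False
      by (auto simp: lb_comp_def)
  qed
  then have "{(p, q). a p \<noteq> 0 \<and> b q \<noteq> 0 \<and> lb_comp p q = r} = {}"
    by blast
  then show ?thesis
    by (simp only: conv_def sum.empty)
qed

lemma conv_lin_comb: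
  assumes S: "finite S" "\<And>s. s \<in> S \<Longrightarrow> locally_finite s"
    and T: "finite T" "\<And>t. t \<in> T \<Longrightarrow> locally_finite t"
  shows "conv (\<lambda>r. \<Sum>s\<in>S. c s * s r) (\<lambda>r. \<Sum>t\<in>T. d t * t r) r = (\<Sum>s\<in>S. \<Sum>t\<in>T. c s * d t * conv s t r)"
proof (cases "finite (fst r)")
  case False
  then show ?thesis
    using S T by (simp add: conv_infinite locally_finite_lin_comb)
next
  case True
  define A where "A = (\<Union>s\<in>S. {p. s p \<noteq> 0 \<and> fst p \<subseteq> fst r})"
  define B where "B = (\<Union>t\<in>T. {q. t q \<noteq> 0 \<and> fst q \<subseteq> fst r})"
  define D where "D = {z \<in> A \<times> B. lb_comp (fst z) (snd z) = r}"
  have fin: "finite A" "finite B"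
    using S T True by (auto simp: A_def B_def locally_finite_def)
  have conv_st: "conv s t r = (\<Sum>z\<in>D. s (fst z) * t (snd z))" if "s \<in> S" "t \<in> T" for s t
    unfolding D_def using that fin by (intro conv_eq_sum_superset) (auto simp: A_def B_def)
  have "{p. (\<Sum>s\<in>S. c s * s p) \<noteq> 0 \<and> fst p \<subseteq> fst r} \<subseteq> A" "{q. (\<Sum>t\<in>T. d t * t q) \<noteq> 0 \<and> fst q \<subseteq> fst r} \<subseteq> B"
    unfolding A_def B_def using lin_comb_nonzero[where S = S and c = c] lin_comb_nonzero[where S = T and c = d] by blast+
  then have "conv (\<lambda>r. \<Sum>s\<in>S. c s * s r) (\<lambda>r. \<Sum>t\<in>T. d t * t r) r
      = (\<Sum>z\<in>D. (\<Sum>s\<in>S. c s * s (fst z)) * (\<Sum>t\<in>T. d t * t (snd z)))"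
    unfolding D_def using fin by (intro conv_eq_sum_superset)
  also have "\<dots> = (\<Sum>z\<in>D. \<Sum>s\<in>S. \<Sum>t\<in>T. c s * d t * (s (fst z) * t (snd z)))"
    by (simp add: sum_product mult_ac)
  also have "\<dots> = (\<Sum>s\<in>S. \<Sum>z\<in>D. \<Sum>t\<in>T. c s * d t * (s (fst z) * t (snd z)))"
    by (rule sum.swap)
  also have "\<dots> = (\<Sum>s\<in>S. \<Sum>t\<in>T. \<Sum>z\<in>D. c s * d t * (s (fst z) * t (snd z)))"
    by (rule sum.cong[OF refl], rule sum.swap)
  also have "\<dots> = (\<Sum>s\<in>S. \<Sum>t\<in>T. c s * d t * (\<Sum>z\<in>D. s (fst z) * t (snd z)))"
    by (simp only: sum_distrib_left)
  also have "\<dots> = (\<Sum>s\<in>S. \<Sum>t\<in>T. c s * d t * conv s t r)"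
    by (simp add: conv_st)
  finally show ?thesis .
qed

lemma lb_comp_commute:
  assumes p: "supported_on {} I (fst p) (snd p)" and q: "supported_on {} I (fst q) (snd q)"
    and disj: "fst p \<inter> fst q = {}"
  shows "lb_comp p q = lb_comp q p"
proof -
  have out: "v \<notin> OmegaF {} I (fst q)" if "v \<in> OmegaF {} I (fst p)" for v
    using that disj by (cases v rule: pt_cases) auto
  have "snd p (snd q v) = snd q (snd p v)" for v
  proof (cases "v \<in> OmegaF {} I (fst p)")
    case True
    then show ?thesis
      using out supported_on_maps[OF p] supported_on_fixes[OF q] by metis
  next
    case False
    show ?thesis
    proof (cases "v \<in> OmegaF {} I (fst q)")
      case True
      then have "snd q v \<notin> OmegaF {} I (fst p)"
        using out supported_on_maps[OF q] by blast
      then show ?thesis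
        using False supported_on_fixes[OF p] by metis
    next
      case False
      then show ?thesis
        using \<open>v \<notin> OmegaF {} I (fst p)\<close> supported_on_fixes[OF p] supported_on_fixes[OF q] by metis
    qed
  qed
  then show ?thesis
    by (auto simp: lb_comp_def fun_eq_iff)
qed

lemma Bser_block_swap:
  fixes I :: "'i set" and g h :: "('x,'i) pt \<Rightarrow> ('x,'i) pt"
  assumes g: "supported_on {} I {1..n} g" and h: "supported_on {} I {1..k} h"
  shows "Bser {} I (n + k) (glue {} I n k g h (block_pair n k)) = Bser {} I (k + n) (glue {} I k n h g (block_pair k n))"
proof
  fix r
  define D where "D n k g h = {x \<in> factorizations ({} :: 'x set) I n k g h r. fst x ` {1..n} \<inter> snd x ` {1..k} = {}}" for n k g h
  have "(\<tau>, \<sigma>) \<in> D k n h g \<longleftrightarrow> (\<sigma>, \<tau>) \<in> D n k g h" for \<sigma> \<tau>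
  proof -
    have "lb_comp (conj_loc {} I n g \<sigma>) (conj_loc {} I k h \<tau>) = lb_comp (conj_loc {} I k h \<tau>) (conj_loc {} I n g \<sigma>)"
      if "\<sigma> ` {1..n} \<inter> \<tau> ` {1..k} = {}"
      using that supported_on_conj_loc[OF g] supported_on_conj_loc[OF h] by (intro lb_comp_commute) simp_all
    then show ?thesis
      by (auto simp: D_def factorizations_def)
  qed
  then have "D k n h g = prod.swap ` D n k g h"
    by force
  then have "card (D k n h g) = card (D n k g h)"
    by (simp add: card_image)
  then show "Bser {} I (n + k) (glue {} I n k g h (block_pair n k)) r = Bser {} I (k + n) (glue {} I k n h g (block_pair k n)) r"
    by (simp add: Bser_block_eq_card g h D_def)
qed

lemma conv_Bser_in_Bfilt:
  assumes adm: "admissible_group X I G" and g: "g \<in> Gn X I G n" and h: "h \<in> Gn X I G k"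
  shows "(\<lambda>r. conv (Bser X I n g) (Bser X I k h) r) \<in> Bfilt X I G (int (n + k))"
proof -
  have "(\<lambda>r. conv (Bser X I n g) (Bser X I k h) r - Bser X I (n + k) (glue X I n k g h (block_pair n k)) r)
      \<in> Bfilt X I G (int (n + k))"
    using conv_Bser_minus_leading_in_Bfilt[OF adm g h] Bfilt_mono[of "int (n + k) - 1" "int (n + k)"] by auto
  moreover have "Bser X I (n + k) (glue X I n k g h (block_pair n k)) \<in> Bfilt X I G (int (n + k))"
    using glue_in_Gn[OF adm _ g h, of "fst (block_pair n k)" "snd (block_pair n k)"] block_pair_covering
    by (intro Bser_in_Bfilt) simp_all
  ultimately show ?thesis
    using Bfilt_add by fastforce
qed

lemma commutator_Bser_in_Bfilt:
  assumes adm: "admissible_group {} I G" and g: "g \<in> Gn {} I G n" and h: "h \<in> Gn {} I G n'"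
    and le: "n \<le> k" "n' \<le> l"
  shows "(\<lambda>r. conv (Bser {} I n g) (Bser {} I n' h) r - conv (Bser {} I n' h) (Bser {} I n g) r)
    \<in> Bfilt {} I G (int (k + l) - 1)"
proof (cases "n + n' < k + l")
  case True
  then have "Bfilt {} I G (int (n + n')) \<subseteq> Bfilt {} I G (int (k + l) - 1)"
    "Bfilt {} I G (int (n' + n)) \<subseteq> Bfilt {} I G (int (k + l) - 1)"
    by (auto intro!: Bfilt_mono)
  then show ?thesis
    using conv_Bser_in_Bfilt[OF adm g h] conv_Bser_in_Bfilt[OF adm h g] by (auto intro: Bfilt_diff)
next
  case False
  then have nn': "n + n' = k + l" "n' + n = k + l"
    using le by auto
  define e where "e = Bser {} I (n + n') (glue {} I n n' g h (block_pair n n'))"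
  have "e = Bser {} I (n' + n) (glue {} I n' n h g (block_pair n' n))"
    unfolding e_def using adm g h by (intro Bser_block_swap Gn_supported_on)
  then have "(\<lambda>r. conv (Bser {} I n g) (Bser {} I n' h) r - e r) \<in> Bfilt {} I G (int (n + n') - 1)"
    "(\<lambda>r. conv (Bser {} I n' h) (Bser {} I n g) r - e r) \<in> Bfilt {} I G (int (n' + n) - 1)"
    using conv_Bser_minus_leading_in_Bfilt[OF adm g h] conv_Bser_minus_leading_in_Bfilt[OF adm h g]
    by (simp_all only: e_def)
  then have "(\<lambda>r. conv (Bser {} I n g) (Bser {} I n' h) r - e r) \<in> Bfilt {} I G (int (k + l) - 1)"
    "(\<lambda>r. conv (Bser {} I n' h) (Bser {} I n g) r - e r) \<in> Bfilt {} I G (int (k + l) - 1)"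
    by (simp_all only: nn')
  from Bfilt_diff[OF this] show ?thesis
    by simp
qed

lemma commutator_in_Bfilt:
  assumes adm: "admissible_group {} I G"
    and x: "x \<in> Bfilt {} I G (int k)" and y: "y \<in> Bfilt {} I G (int l)"
  shows "(\<lambda>r. conv x y r - conv y x r) \<in> Bfilt {} I G (int (k + l) - 1)"
proof -
  obtain S c where S: "finite S" "S \<subseteq> {Bser {} I j g | j g. int j \<le> int k \<and> g \<in> Gn {} I G j}"
    and x_eq: "x = (\<lambda>r. \<Sum>s\<in>S. c s * s r)"
    using x by (auto simp: Bfilt_def lin_span_def)
  obtain T d where T: "finite T" "T \<subseteq> {Bser {} I j h | j h. int j \<le> int l \<and> h \<in> Gn {} I G j}"
    and y_eq: "y = (\<lambda>r. \<Sum>t\<in>T. d t * t r)"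
    using y by (auto simp: Bfilt_def lin_span_def)
  have lf: "\<And>s. s \<in> S \<Longrightarrow> locally_finite s" "\<And>t. t \<in> T \<Longrightarrow> locally_finite t"
    using S(2) T(2) locally_finite_Bser by blast+
  have "conv x y r - conv y x r = (\<Sum>s\<in>S. \<Sum>t\<in>T. c s * d t * (conv s t r - conv t s r))" for r
  proof -
    have "conv y x r = (\<Sum>t\<in>T. \<Sum>s\<in>S. d t * c s * conv t s r)"
      unfolding x_eq y_eq by (rule conv_lin_comb[OF T(1) lf(2) S(1) lf(1)])
    also have "\<dots> = (\<Sum>s\<in>S. \<Sum>t\<in>T. c s * d t * conv t s r)"
      by (subst sum.swap) (simp add: mult_ac)
    finally have "conv y x r = (\<Sum>s\<in>S. \<Sum>t\<in>T. c s * d t * conv t s r)" .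
    moreover have "conv x y r = (\<Sum>s\<in>S. \<Sum>t\<in>T. c s * d t * conv s t r)"
      unfolding x_eq y_eq by (rule conv_lin_comb[OF S(1) lf(1) T(1) lf(2)])
    ultimately show ?thesis
      by (simp add: sum_subtractf right_diff_distrib)
  qed
  moreover have "(\<lambda>r. \<Sum>s\<in>S. \<Sum>t\<in>T. c s * d t * (conv s t r - conv t s r)) \<in> Bfilt {} I G (int (k + l) - 1)"
  proof (intro Bfilt_sum Bfilt_scale)
    fix s t assume "s \<in> S" "t \<in> T"
    then obtain j g j' h where "s = Bser {} I j g" "g \<in> Gn {} I G j" "int j \<le> int k"
      and "t = Bser {} I j' h" "h \<in> Gn {} I G j'" "int j' \<le> int l"
      using S(2) T(2) by blast
    then show "(\<lambda>r. conv s t r - conv t s r) \<in> Bfilt {} I G (int (k + l) - 1)"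
      using commutator_Bser_in_Bfilt[OF adm, of g j h j' k l] by simp
  qed
  ultimately show ?thesis
    by simp
qed

theorem proposition3p1:
  fixes X :: "'x set" and I :: "'i set"
    and G :: "(('x,'i) pt \<Rightarrow> ('x,'i) pt) set"
  assumes "finite I" and "countable X" and "admissible_group X I G"
  shows
   "(\<forall>n k g h. g \<in> Gn X I G n \<longrightarrow> h \<in> Gn X I G k \<longrightarrow>
      (let nu = lb_comp (conj_loc X I n g (\<lambda>j. j + k)) ({1..k}, h) in
         fst nu = {1..n+k} \<and> snd nu \<in> Gn X I G (n+k) \<and>
         (\<lambda>r. conv (Bser X I n g) (Bser X I k h) r - Bser X I (n+k) (snd nu) r)
           \<in> Bfilt X I G (int (n+k) - 1)))
    \<and> (X = {} \<longrightarrow>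
       (\<forall>k l x y. x \<in> Bfilt X I G (int k) \<longrightarrow> y \<in> Bfilt X I G (int l) \<longrightarrow>
          (\<lambda>r. conv x y r - conv y x r) \<in> Bfilt X I G (int (k+l) - 1)))"
  using leading_term_conv_Bser[OF assms(3)] commutator_in_Bfilt[of I G] assms(3) by blast

end
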